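(* Let $\mathcal{H}$ be a finite-dimensional Hilbert space, let $\mathcal{E}:\mathcal{L}(\mathcal{H})\to\mathcal{L}(\mathcal{H})$ be a quantum channel, and let $\mathcal{C}\subseteq\mathcal{H}$ be a subspace with orthogonal projection $P_{\mathcal{C}}$. Then $\mathcal{C}$ is correctable for $\mathcal{E}$ if and only if there exist probabilities $p_i\ge 0$ with $\sum_i p_i=1$ and unitary operators $U_i$ on $\mathcal{H}$ such that the mixed unitary channel $\mathcal{F}(\rho)=\sum_i p_i U_i\rho U_i^\dagger$ satisfies $\mathcal{E}(\rho)=\mathcal{F}(\rho)$ for all $\rho\in\mathcal{L}(\mathcal{C})$, and $P_{\mathcal{C}}U_i^\dagger U_j P_{\mathcal{C}}=0$ for all $i\neq j$.
   Context: A quantum channel (quantum operation) on $\mathcal{L}(\mathcal{H})$ is a completely positive trace-preserving linear map; it has a Kraus representation $\mathcal{E}(\rho)=\sum_i E_i\rho E_i^\dagger$ with $\sum_i E_i^\dagger E_i=I$, written $\mathcal{E}\equiv\{E_i\}$. $\mathcal{L}(\mathcal{C})$ is identified with the operators $\rho$ on $\mathcal{H}$ with $\rho=P_{\mathcal{C}}\rho P_{\mathcal{C}}$. Write $\mathcal{P}_{\mathcal{C}}(\rho)=P_{\mathcal{C}}\rho P_{\mathcal{C}}$. A subspace $\mathcal{C}$ is correctable for $\mathcal{E}$ if there is a quantum channel $\mathcal{R}$ on $\mathcal{L}(\mathcal{H})$ with $\mathcal{R}\circ\mathcal{E}\circ\mathcal{P}_{\mathcal{C}}=\mathcal{P}_{\mathcal{C}}$.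 *)

theory Defs
  imports "Jordan_Normal_Form.Matrix"
begin

text \<open>The Hilbert space H is C^n (n = dim H); operators on H are n x n complex
  matrices (carrier_mat n n). Maps on L(H) are functions complex mat => complex mat,
  of which only the behaviour on carrier_mat n n matters.\<close>

definition adj :: "complex mat \<Rightarrow> complex mat" where
  "adj A = mat (dim_col A) (dim_row A) (\<lambda>(i,j). cnj (A $$ (j,i)))"

definition mtrace :: "complex mat \<Rightarrow> complex" where
  "mtrace A = (\<Sum>i<dim_row A. A $$ (i,i))"

definition psd :: "nat \<Rightarrow> complex mat \<Rightarrow> bool" where
  "psd n A \<longleftrightarrow> A \<in> carrier_mat n n \<and> adj A = A \<and>
     (\<forall>v \<in> carrier_vec n.
        let q = (\<Sum>i<n. \<Sum>j<n. cnj (v $ i) * A $$ (i,j) * v $ j) in Im q = 0 \<and> 0 \<le> Re q)"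

definition lin_map :: "nat \<Rightarrow> (complex mat \<Rightarrow> complex mat) \<Rightarrow> bool" where
  "lin_map n E \<longleftrightarrow> (\<forall>A \<in> carrier_mat n n. E A \<in> carrier_mat n n) \<and>
     (\<forall>A \<in> carrier_mat n n. \<forall>B \<in> carrier_mat n n. E (A + B) = E A + E B) \<and>
     (\<forall>A \<in> carrier_mat n n. \<forall>c. E (c \<cdot>\<^sub>m A) = c \<cdot>\<^sub>m E A)"

text \<open>The map id_k \<otimes> E on L(C^k \<otimes> C^n), acting blockwise on (k*n) x (k*n) matrices.\<close>
definition lift :: "nat \<Rightarrow> nat \<Rightarrow> (complex mat \<Rightarrow> complex mat) \<Rightarrow> complex mat \<Rightarrow> complex mat" where
  "lift k n E M = mat (k*n) (k*n) (\<lambda>(i,j).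
     E (mat n n (\<lambda>(a,b). M $$ ((i div n) * n + a, (j div n) * n + b))) $$ (i mod n, j mod n))"

definition completely_positive :: "nat \<Rightarrow> (complex mat \<Rightarrow> complex mat) \<Rightarrow> bool" where
  "completely_positive n E \<longleftrightarrow> (\<forall>k M. psd (k*n) M \<longrightarrow> psd (k*n) (lift k n E M))"

definition trace_preserving :: "nat \<Rightarrow> (complex mat \<Rightarrow> complex mat) \<Rightarrow> bool" where
  "trace_preserving n E \<longleftrightarrow> (\<forall>A \<in> carrier_mat n n. mtrace (E A) = mtrace A)"

definition quantum_channel :: "nat \<Rightarrow> (complex mat \<Rightarrow> complex mat) \<Rightarrow> bool" where
  "quantum_channel n E \<longleftrightarrow> lin_map n E \<and> completely_positive n E \<and> trace_preserving n E"

definition unitary_mat :: "nat \<Rightarrow> complex mat \<Rightarrow> bool" where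
  "unitary_mat n U \<longleftrightarrow> U \<in> carrier_mat n n \<and> adj U * U = 1\<^sub>m n"

definition orth_proj :: "nat \<Rightarrow> complex mat \<Rightarrow> bool" where
  "orth_proj n P \<longleftrightarrow> P \<in> carrier_mat n n \<and> P * P = P \<and> adj P = P"

definition correctable :: "nat \<Rightarrow> (complex mat \<Rightarrow> complex mat) \<Rightarrow> complex mat \<Rightarrow> bool" where
  "correctable n E P \<longleftrightarrow> (\<exists>R. quantum_channel n R \<and>
     (\<forall>\<rho> \<in> carrier_mat n n. R (E (P * \<rho> * P)) = P * \<rho> * P))"

definition mixed_unitary :: "nat \<Rightarrow> nat \<Rightarrow> (nat \<Rightarrow> real) \<Rightarrow> (nat \<Rightarrow> complex mat) \<Rightarrow> complex mat \<Rightarrow> complex mat" where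
  "mixed_unitary n m p U \<rho> = mat n n (\<lambda>(a,b).
     \<Sum>i<m. complex_of_real (p i) * (U i * \<rho> * adj (U i)) $$ (a,b))"

end

theory Submission
  imports Defs "Jordan_Normal_Form.Spectral_Radius"
begin

(* Forward direction.  Write E and a recovery R in Kraus form (Choi's theorem, channel_kraus).
   Since R (E (P X P)) = P X P, every composite operator L_l K_k P is a multiple c_lk P
   (Knill-Laflamme, recovery_kraus_proportional).  Diagonalising the Gram matrix of the c_lk and
   mixing the operators K_k P accordingly (unitary freedom) yields Kraus operators G_r of E on
   the code with G_r\<^sup>\<dagger> G_s = \<delta>_rs \<mu>_r P (kraus_orthogonalise); trace preservation gives
   \<Sum>_r \<mu>_r = 1.  Each G_r / \<surd>\<mu>_r is an isometry of the code space and extends to a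
   unitary U_r (unitary_extension), which gives the mixed unitary channel and the orthogonality
   P U_r\<^sup>\<dagger> U_s P = 0 (orthogonal_kraus_mixed_unitary).

   Backward direction.  The isometries W_i = U_i P satisfy W_i\<^sup>\<dagger> W_j = \<delta>_ij P, so the Kraus
   family W_i\<^sup>\<dagger>, completed by operators supported on the complement of their joint range,
   is a channel undoing every branch (isometries_recovery); linearity finishes the proof. *)

lemma sum_split_at: fixes r n :: nat
  assumes "r \<le> n"
  shows "(\<Sum>i<n. F i) = (\<Sum>i<r. F i) + (\<Sum>i<n-r. F (r+i))"
proof -
  have "{..<n} = {..<r} \<union> {r..<n}" using ivl_disj_un_one(2)[OF assms] by simp
  then have "(\<Sum>i<n. F i) = (\<Sum>i<r. F i) + (\<Sum>i\<in>{r..<n}. F i)"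
    by (simp add: sum.union_disjoint ivl_disj_int)
  moreover have "(\<Sum>i<n-r. F (r+i)) = (\<Sum>i\<in>{r..<n}. F i)"
    by (rule sum.reindex_bij_witness[of _ "\<lambda>i. i - r" "\<lambda>i. r + i"]) auto
  ultimately show ?thesis by simp
qed

lemma sum_blocks: fixes k n :: nat shows "(\<Sum>p<k*n. F p) = (\<Sum>a<k. \<Sum>x<n. F (a*n+x))"
proof (induction k)
  case 0 then show ?case by simp
next
  case (Suc k)
  have "(\<Sum>p<Suc k*n. F p) = (\<Sum>p<k*n. F p) + (\<Sum>x<Suc k*n - k*n. F (k*n+x))"
    by (rule sum_split_at) simp
  then show ?case using Suc by simp
qed

lemma divmod_block: fixes n :: nat assumes "x < n" shows "(a*n+x) div n = a" "(a*n+x) mod n = x"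
  using assms by auto

lemma sum_block:
  fixes n k :: nat and F G :: "nat \<Rightarrow> complex"
  assumes i: "i < k*n"
  shows "(\<Sum>p<k*n. (if p div n = i div n then F (p mod n) else 0) * G p) = (\<Sum>x<n. F x * G ((i div n)*n + x))"
proof -
  have ik: "i div n < k" using i by (metis less_mult_imp_div_less)
  have "(\<Sum>p<k*n. (if p div n = i div n then F (p mod n) else 0) * G p)
      = (\<Sum>a<k. \<Sum>x<n. (if (a*n+x) div n = i div n then F ((a*n+x) mod n) else 0) * G (a*n+x))"
    by (rule sum_blocks)
  also have "\<dots> = (\<Sum>a<k. if a = i div n then (\<Sum>x<n. F x * G (a*n+x)) else 0)"
    by (intro sum.cong refl) (auto simp: divmod_block intro!: sum.neutral)
  also have "\<dots> = (\<Sum>x<n. F x * G ((i div n)*n + x))" using ik by simp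
  finally show ?thesis .
qed

lemma sum_rotate3: "(\<Sum>i\<in>A. \<Sum>j\<in>B. \<Sum>l\<in>C. G i j l) = (\<Sum>l\<in>C. \<Sum>i\<in>A. \<Sum>j\<in>B. G i j l)"
proof -
  have "(\<Sum>i\<in>A. \<Sum>j\<in>B. \<Sum>l\<in>C. G i j l) = (\<Sum>i\<in>A. \<Sum>l\<in>C. \<Sum>j\<in>B. G i j l)"
    by (intro sum.cong refl) (rule sum.swap)
  also have "\<dots> = (\<Sum>l\<in>C. \<Sum>i\<in>A. \<Sum>j\<in>B. G i j l)" by (rule sum.swap)
  finally show ?thesis .
qed

lemma sum_swap_inner: "(\<Sum>j\<in>B. \<Sum>p\<in>C. \<Sum>q\<in>D. F j p q) = (\<Sum>p\<in>C. \<Sum>q\<in>D. \<Sum>j\<in>B. F j p q)"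
proof -
  have "(\<Sum>j\<in>B. \<Sum>p\<in>C. \<Sum>q\<in>D. F j p q) = (\<Sum>p\<in>C. \<Sum>j\<in>B. \<Sum>q\<in>D. F j p q)" by (rule sum.swap)
  also have "\<dots> = (\<Sum>p\<in>C. \<Sum>q\<in>D. \<Sum>j\<in>B. F j p q)" by (intro sum.cong refl) (rule sum.swap)
  finally show ?thesis .
qed

lemma sum_swap_pairs: "(\<Sum>i\<in>A. \<Sum>j\<in>B. \<Sum>p\<in>C. \<Sum>q\<in>D. F i j p q) = (\<Sum>p\<in>C. \<Sum>q\<in>D. \<Sum>i\<in>A. \<Sum>j\<in>B. F i j p q)"
proof -
  have "(\<Sum>i\<in>A. \<Sum>j\<in>B. \<Sum>p\<in>C. \<Sum>q\<in>D. F i j p q) = (\<Sum>i\<in>A. \<Sum>p\<in>C. \<Sum>q\<in>D. \<Sum>j\<in>B. F i j p q)"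
    by (intro sum.cong refl) (rule sum_swap_inner)
  also have "\<dots> = (\<Sum>p\<in>C. \<Sum>q\<in>D. \<Sum>i\<in>A. \<Sum>j\<in>B. F i j p q)"
    by (rule sum_swap_inner)
  finally show ?thesis .
qed

lemma sum_norm_sq_zero:
  assumes fin: "finite J" and s: "(\<Sum>j\<in>J. x j * cnj (x j)) = 0" and j: "j \<in> J"
  shows "x j = 0"
proof -
  have "(\<Sum>j\<in>J. (cmod (x j))^2) = 0"
  proof -
    have "of_real (\<Sum>j\<in>J. (cmod (x j))^2) = (\<Sum>j\<in>J. x j * cnj (x j))"
      unfolding of_real_sum by (intro sum.cong refl) (simp add: complex_norm_square del: of_real_power)
    then show ?thesis using s by (simp only: of_real_eq_0_iff)
  qed
  then have "(cmod (x j))^2 = 0" using sum_nonneg_eq_0_iff[OF fin, of "\<lambda>j. (cmod (x j))^2"] j by auto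
  then show ?thesis by simp
qed

lemma mult_mat_entry:
  assumes "A \<in> carrier_mat n m" "B \<in> carrier_mat m p" "i < n" "j < p"
  shows "(A * B) $$ (i,j) = (\<Sum>k<m. A $$ (i,k) * B $$ (k,j))"
  using assms by (auto simp: scalar_prod_def atLeast0LessThan intro!: sum.cong)

lemma assoc4:
  assumes "A \<in> carrier_mat n n" "B \<in> carrier_mat n n" "C \<in> carrier_mat n n" "D \<in> carrier_mat n n"
  shows "A * B * C * D = (A * B) * (C * D)"
  using assms by (simp add: assoc_mult_mat[of _ n n _ n _ n])

lemma assoc5:
  assumes "A \<in> carrier_mat n n" "B \<in> carrier_mat n n" "C \<in> carrier_mat n n" "D \<in> carrier_mat n n" "F \<in> carrier_mat n n"
  shows "A * (B * C * D) * F = (A * B) * C * (D * F)"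
  using assms by (simp add: assoc_mult_mat[of _ n n _ n _ n])

lemma smult_one_mat: "(1::complex) \<cdot>\<^sub>m A = A"
  by (rule eq_matI) auto

definition mat_comb :: "nat \<Rightarrow> nat \<Rightarrow> (nat \<Rightarrow> complex) \<Rightarrow> (nat \<Rightarrow> complex mat) \<Rightarrow> complex mat" where
  "mat_comb n N c A = mat n n (\<lambda>(x,y). \<Sum>k<N. c k * A k $$ (x,y))"

lemma mat_comb_carrier[simp]: "mat_comb n N c A \<in> carrier_mat n n"
  unfolding mat_comb_def by simp

lemma mat_comb_dims[simp]: "dim_row (mat_comb n N c A) = n" "dim_col (mat_comb n N c A) = n"
  unfolding mat_comb_def by simp_all

lemma mat_comb_index: "x < n \<Longrightarrow> y < n \<Longrightarrow> mat_comb n N c A $$ (x,y) = (\<Sum>k<N. c k * A k $$ (x,y))"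
  unfolding mat_comb_def by simp

lemma mat_comb_cong: "(\<And>k. k < N \<Longrightarrow> A k = B k) \<Longrightarrow> mat_comb n N c A = mat_comb n N c B"
  unfolding mat_comb_def by simp

lemma mat_comb_mult_left:
  assumes L: "L \<in> carrier_mat n n" and A: "\<And>k. k < N \<Longrightarrow> A k \<in> carrier_mat n n"
  shows "L * mat_comb n N c A = mat_comb n N c (\<lambda>k. L * A k)"
proof (rule eq_matI)
  fix z a assume "z < dim_row (mat_comb n N c (\<lambda>k. L * A k))" "a < dim_col (mat_comb n N c (\<lambda>k. L * A k))"
  then have z: "z < n" and a: "a < n" by auto
  have "(L * mat_comb n N c A) $$ (z,a) = (\<Sum>x<n. L $$ (z,x) * (\<Sum>k<N. c k * A k $$ (x,a)))"
    using mult_mat_entry[OF L mat_comb_carrier z a] a by (simp add: mat_comb_index)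
  also have "\<dots> = (\<Sum>k<N. c k * (\<Sum>x<n. L $$ (z,x) * A k $$ (x,a)))"
    by (simp add: sum_distrib_left ac_simps) (rule sum.swap)
  also have "\<dots> = mat_comb n N c (\<lambda>k. L * A k) $$ (z,a)"
    unfolding mat_comb_index[OF z a] by (intro sum.cong refl) (simp add: mult_mat_entry[OF L _ z a] A)
  finally show "(L * mat_comb n N c A) $$ (z,a) = mat_comb n N c (\<lambda>k. L * A k) $$ (z,a)" .
qed (use L in auto)

lemma mat_comb_mult_right:
  assumes R: "R \<in> carrier_mat n n" and A: "\<And>k. k < N \<Longrightarrow> A k \<in> carrier_mat n n"
  shows "mat_comb n N c A * R = mat_comb n N c (\<lambda>k. A k * R)"
proof (rule eq_matI)
  fix z a assume "z < dim_row (mat_comb n N c (\<lambda>k. A k * R))" "a < dim_col (mat_comb n N c (\<lambda>k. A k * R))"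
  then have z: "z < n" and a: "a < n" by auto
  have "(mat_comb n N c A * R) $$ (z,a) = (\<Sum>x<n. (\<Sum>k<N. c k * A k $$ (z,x)) * R $$ (x,a))"
    using mult_mat_entry[OF mat_comb_carrier R z a] z by (simp add: mat_comb_index)
  also have "\<dots> = (\<Sum>k<N. c k * (\<Sum>x<n. A k $$ (z,x) * R $$ (x,a)))"
    by (simp add: sum_distrib_left sum_distrib_right ac_simps) (rule sum.swap)
  also have "\<dots> = mat_comb n N c (\<lambda>k. A k * R) $$ (z,a)"
    unfolding mat_comb_index[OF z a] by (intro sum.cong refl) (simp add: mult_mat_entry[OF _ R z a] A)
  finally show "(mat_comb n N c A * R) $$ (z,a) = mat_comb n N c (\<lambda>k. A k * R) $$ (z,a)" .
qed (use R in auto)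

lemma mat_comb_smult:
  assumes "X \<in> carrier_mat n n"
  shows "mat_comb n N c (\<lambda>k. d k \<cdot>\<^sub>m X) = (\<Sum>k<N. c k * d k) \<cdot>\<^sub>m X"
  using assms by (intro eq_matI) (auto simp: mat_comb_index sum_distrib_left ac_simps)

lemma adj_carrier[simp]: "A \<in> carrier_mat n m \<Longrightarrow> adj A \<in> carrier_mat m n"
  unfolding adj_def by auto

lemma adj_dims[simp]: "dim_row (adj A) = dim_col A" "dim_col (adj A) = dim_row A"
  unfolding adj_def by auto

lemma adj_index[simp]: "i < dim_col A \<Longrightarrow> j < dim_row A \<Longrightarrow> adj A $$ (i,j) = cnj (A $$ (j,i))"
  unfolding adj_def by auto

lemma adj_adj: "adj (adj A) = A"
  by (rule eq_matI) (auto simp: adj_def)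

lemma adj_one: "adj (1\<^sub>m n) = (1\<^sub>m n :: complex mat)"
  by (rule eq_matI) (auto simp: adj_def)

lemma adj_smult: "adj (c \<cdot>\<^sub>m A) = cnj c \<cdot>\<^sub>m adj A"
  by (rule eq_matI) (auto simp: adj_def)

lemma adj_mult:
  assumes "A \<in> carrier_mat n m" "B \<in> carrier_mat m p"
  shows "adj (A * B) = adj B * adj A"
proof (rule eq_matI)
  fix i j assume "i < dim_row (adj B * adj A)" "j < dim_col (adj B * adj A)"
  then have i: "i < p" and j: "j < n" using assms by auto
  show "adj (A * B) $$ (i,j) = (adj B * adj A) $$ (i,j)"
    using assms i j mult_mat_entry[OF assms j i] mult_mat_entry[OF adj_carrier[OF assms(2)] adj_carrier[OF assms(1)] i j]
    by (simp add: cnj_sum mult.commute)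
qed (use assms in auto)

lemma hermitian_entry:
  assumes "A \<in> carrier_mat n n" "adj A = A" "a < n" "b < n"
  shows "A $$ (b,a) = cnj (A $$ (a,b))"
  using adj_index[of b A a] assms by (auto simp: carrier_matD)

lemma adj_smult_mult:
  assumes A: "A \<in> carrier_mat n n" and B: "B \<in> carrier_mat n n"
  shows "adj (a \<cdot>\<^sub>m A) * (b \<cdot>\<^sub>m B) = (cnj a * b) \<cdot>\<^sub>m (adj A * B)"
proof -
  have "adj (a \<cdot>\<^sub>m A) * (b \<cdot>\<^sub>m B) = cnj a \<cdot>\<^sub>m (adj A * (b \<cdot>\<^sub>m B))"
    unfolding adj_smult using mult_smult_assoc_mat[OF adj_carrier[OF A] smult_carrier_mat[OF B]] .
  also have "\<dots> = cnj a \<cdot>\<^sub>m (b \<cdot>\<^sub>m (adj A * B))" using mult_smult_distrib[OF adj_carrier[OF A] B] by simp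
  also have "\<dots> = (cnj a * b) \<cdot>\<^sub>m (adj A * B)" by (rule eq_matI) auto
  finally show ?thesis .
qed

lemma smult_sandwich:
  assumes G: "G \<in> carrier_mat n n" and \<rho>: "\<rho> \<in> carrier_mat n n"
  shows "(c \<cdot>\<^sub>m G) * \<rho> * adj (c \<cdot>\<^sub>m G) = (c * cnj c) \<cdot>\<^sub>m (G * \<rho> * adj G)"
proof -
  have "(c \<cdot>\<^sub>m G) * \<rho> * adj (c \<cdot>\<^sub>m G) = c \<cdot>\<^sub>m (G * \<rho>) * (cnj c \<cdot>\<^sub>m adj G)"
    unfolding adj_smult using mult_smult_assoc_mat[OF G \<rho>] by simp
  also have "\<dots> = c \<cdot>\<^sub>m (cnj c \<cdot>\<^sub>m (G * \<rho> * adj G))"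
    using mult_smult_assoc_mat[of "G * \<rho>" n n "cnj c \<cdot>\<^sub>m adj G" n c]
      mult_smult_distrib[of "G * \<rho>" n n "adj G" n "cnj c"] G \<rho> by simp
  also have "\<dots> = (c * cnj c) \<cdot>\<^sub>m (G * \<rho> * adj G)" by (rule eq_matI) auto
  finally show ?thesis .
qed

definition cinner :: "nat \<Rightarrow> (nat \<Rightarrow> complex) \<Rightarrow> (nat \<Rightarrow> complex) \<Rightarrow> complex" where
  "cinner n u v = (\<Sum>a<n. cnj (u a) * v a)"

lemma cinner_cnj: "cinner n v u = cnj (cinner n u v)"
  unfolding cinner_def by (simp add: mult.commute)

lemma cinner_self_real: "cinner n u u = of_real (\<Sum>a<n. (cmod (u a))^2)"
  unfolding cinner_def of_real_sum
  by (rule sum.cong) (auto simp: mult.commute complex_norm_square simp del: of_real_power)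

lemma cinner_self_ge0: "Re (cinner n u u) \<ge> 0" "Im (cinner n u u) = 0"
  unfolding cinner_self_real by (auto intro: sum_nonneg)

lemma cinner_self_zero: assumes "cinner n u u = 0" "a < n" shows "u a = 0"
proof -
  have "(\<Sum>a<n. (cmod (u a))^2) = 0" using assms(1) unfolding cinner_self_real by (simp only: of_real_eq_0_iff)
  then have "(cmod (u a))^2 = 0"
    using sum_nonneg_eq_0_iff[of "{..<n}" "\<lambda>a. (cmod (u a))^2"] assms(2) by auto
  then show ?thesis by simp
qed

lemma cinner_lin1: "cinner n (\<lambda>a. \<Sum>j\<in>J. c j * w j a) v = (\<Sum>j\<in>J. cnj (c j) * cinner n (w j) v)"
  unfolding cinner_def by (simp add: sum_distrib_left sum_distrib_right algebra_simps) (rule sum.swap)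

lemma cinner_lin2: "cinner n u (\<lambda>a. \<Sum>j\<in>J. c j * w j a) = (\<Sum>j\<in>J. c j * cinner n u (w j))"
  unfolding cinner_def by (simp add: sum_distrib_left algebra_simps) (rule sum.swap)

lemma cinner_scale1: "cinner n (\<lambda>a. c * w a) v = cnj c * cinner n w v"
  unfolding cinner_def by (simp add: sum_distrib_left algebra_simps)

lemma cinner_scale2: "cinner n u (\<lambda>a. c * w a) = c * cinner n u w"
  unfolding cinner_def by (simp add: sum_distrib_left algebra_simps)

lemma cinner_cong1: "(\<And>a. a < n \<Longrightarrow> u a = u' a) \<Longrightarrow> cinner n u v = cinner n u' v"
  unfolding cinner_def by simp

lemma cinner_cong2: "(\<And>a. a < n \<Longrightarrow> v a = v' a) \<Longrightarrow> cinner n u v = cinner n u v'"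
  unfolding cinner_def by simp

lemma normalize_vec:
  assumes "cinner n y y \<noteq> 0"
  shows "\<exists>c. c \<noteq> 0 \<and> cinner n (\<lambda>a. c * y a) (\<lambda>a. c * y a) = 1"
proof -
  define r where "r = Re (cinner n y y)"
  have r: "cinner n y y = of_real r" "r > 0"
    using cinner_self_ge0[of n y] assms unfolding r_def
    by (auto simp: complex_eq_iff less_eq_real_def)
  have "cinner n (\<lambda>a. of_real (1 / sqrt r) * y a) (\<lambda>a. of_real (1 / sqrt r) * y a)
     = of_real (1 / sqrt r) * of_real (1 / sqrt r) * cinner n y y"
    unfolding cinner_def by (simp add: sum_distrib_left algebra_simps)
  also have "\<dots> = 1" using r by (simp add: of_real_mult[symmetric] del: of_real_mult)
  finally show ?thesis using r by (intro exI[of _ "of_real (1 / sqrt r)"]) auto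
qed

definition apply_mat :: "complex mat \<Rightarrow> (nat \<Rightarrow> complex) \<Rightarrow> nat \<Rightarrow> complex" where
  "apply_mat H v = (\<lambda>a. \<Sum>b<dim_col H. H $$ (a,b) * v b)"

lemma apply_mat_lin: "H \<in> carrier_mat n n \<Longrightarrow> apply_mat H (\<lambda>b. \<Sum>j\<in>J. c j * w j b) a = (\<Sum>j\<in>J. c j * apply_mat H (w j) a)"
  unfolding apply_mat_def by (simp add: sum_distrib_left algebra_simps) (rule sum.swap)

lemma apply_mat_cong: "(\<And>b. b < dim_col A \<Longrightarrow> v b = w b) \<Longrightarrow> apply_mat A v a = apply_mat A w a"
  unfolding apply_mat_def by simp

lemma apply_mat_mult:
  assumes A: "A \<in> carrier_mat n m" and B: "B \<in> carrier_mat m p" and a: "a < n"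
  shows "apply_mat (A * B) v a = apply_mat A (apply_mat B v) a"
proof -
  have "apply_mat (A * B) v a = (\<Sum>b<p. \<Sum>k<m. A $$ (a,k) * B $$ (k,b) * v b)"
    unfolding apply_mat_def using A B a mult_mat_entry[OF A B a] index_mult_mat(3)[of A B] by (auto simp: sum_distrib_right simp del: index_mult_mat intro!: sum.cong)
  also have "\<dots> = (\<Sum>k<m. \<Sum>b<p. A $$ (a,k) * B $$ (k,b) * v b)" by (rule sum.swap)
  also have "\<dots> = apply_mat A (apply_mat B v) a"
    unfolding apply_mat_def using A B by (simp add: sum_distrib_left ac_simps)
  finally show ?thesis .
qed

lemma cinner_adj:
  assumes A: "A \<in> carrier_mat n n"
  shows "cinner n u (apply_mat A v) = cinner n (apply_mat (adj A) u) v"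
proof -
  have "cinner n u (apply_mat A v) = (\<Sum>a<n. \<Sum>b<n. cnj (u a) * A $$ (a,b) * v b)"
    unfolding cinner_def apply_mat_def using A by (simp add: sum_distrib_left ac_simps)
  also have "\<dots> = (\<Sum>b<n. \<Sum>a<n. cnj (u a) * A $$ (a,b) * v b)" by (rule sum.swap)
  also have "\<dots> = cinner n (apply_mat (adj A) u) v"
    unfolding cinner_def apply_mat_def using A by (simp add: sum_distrib_right sum_distrib_left cnj_sum ac_simps)
  finally show ?thesis .
qed

lemma cinner_herm:
  assumes "H \<in> carrier_mat n n" "adj H = H"
  shows "cinner n u (apply_mat H v) = cinner n (apply_mat H u) v"
proof -
  have "cinner n u (apply_mat H v) = (\<Sum>a<n. \<Sum>b<n. cnj (u a) * H $$ (a,b) * v b)"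
    unfolding cinner_def apply_mat_def using assms by (simp add: sum_distrib_left algebra_simps)
  also have "\<dots> = (\<Sum>b<n. \<Sum>a<n. cnj (u a) * H $$ (a,b) * v b)" by (rule sum.swap)
  also have "\<dots> = cinner n (apply_mat H u) v"
  proof -
    have h: "cnj (H $$ (b,a)) = H $$ (a,b)" if "a < n" "b < n" for a b
      using hermitian_entry[OF assms that] by simp
    show ?thesis
      unfolding cinner_def apply_mat_def using assms h
      by (auto simp: sum_distrib_right sum_distrib_left algebra_simps intro!: sum.cong)
  qed
  finally show ?thesis .
qed

definition orthonormal :: "nat \<Rightarrow> 'i set \<Rightarrow> ('i \<Rightarrow> nat \<Rightarrow> complex) \<Rightarrow> bool" where
  "orthonormal n S f \<longleftrightarrow> (\<forall>i\<in>S. \<forall>j\<in>S. cinner n (f i) (f j) = (if i = j then 1 else 0))"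

(* The residual of the unit vector e_j after projecting onto span {f i | i in S}: e_j - \<Sum>_i <f_i, e_j> f_i. *)
definition residual :: "'i set \<Rightarrow> ('i \<Rightarrow> nat \<Rightarrow> complex) \<Rightarrow> nat \<Rightarrow> nat \<Rightarrow> complex" where
  "residual S f j = (\<lambda>a. (if a = j then 1 else 0) - (\<Sum>i\<in>S. cnj (f i j) * f i a))"

(* The residuals are orthogonal to the family and their diagonal entries add up to n - card S;
   this is the whole linear algebra needed for extending and completing orthonormal families. *)
lemma residual_props:
  assumes o: "orthonormal n S f" and fin: "finite S"
  shows "\<And>k j. k \<in> S \<Longrightarrow> j < n \<Longrightarrow> cinner n (f k) (residual S f j) = 0"
    and "\<And>j. j < n \<Longrightarrow> cinner n (residual S f j) (residual S f j) = cnj (residual S f j j)"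
    and "(\<Sum>j<n. cnj (residual S f j j)) = of_nat n - of_nat (card S)"
proof -
  define g where "g = residual S f"
  note g_def' = g_def[unfolded residual_def]
  have gl: "cinner n u (g j) = cnj (u j) - (\<Sum>i\<in>S. cnj (f i j) * cinner n u (f i))" if j: "j < n" for u j
  proof -
    have "cinner n u (g j) = (\<Sum>a<n. cnj (u a) * (if a = j then 1 else 0))
       - (\<Sum>a<n. \<Sum>i\<in>S. cnj (f i j) * (cnj (u a) * f i a))"
      unfolding cinner_def g_def' by (simp add: algebra_simps sum_subtractf sum_distrib_left)
    also have "(\<Sum>a<n. cnj (u a) * (if a = j then 1 else 0)) = cnj (u j)"
      using j by (simp add: if_distrib cong: if_cong)
    also have "(\<Sum>a<n. \<Sum>i\<in>S. cnj (f i j) * (cnj (u a) * f i a))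
        = (\<Sum>i\<in>S. cnj (f i j) * cinner n u (f i))"
      unfolding cinner_def by (subst sum.swap) (simp add: sum_distrib_left)
    finally show ?thesis .
  qed
  have orth: "cinner n (f k) (g j) = 0" if k: "k \<in> S" and j: "j < n" for k j
  proof -
    have "(\<Sum>i\<in>S. cnj (f i j) * cinner n (f k) (f i)) = (\<Sum>i\<in>S. if i = k then cnj (f i j) else 0)"
      using o k unfolding orthonormal_def by (intro sum.cong) auto
    also have "\<dots> = cnj (f k j)" using k fin by simp
    finally show ?thesis using gl[OF j, of "f k"] by simp
  qed
  then show "\<And>k j. k \<in> S \<Longrightarrow> j < n \<Longrightarrow> cinner n (f k) (residual S f j) = 0" unfolding g_def .
  have "cinner n (g j) (g j) = cnj (g j j)" if j: "j < n" for j
  proof -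
    have "(\<Sum>i\<in>S. cnj (f i j) * cinner n (g j) (f i)) = 0"
      using orth j by (intro sum.neutral) (simp add: cinner_cnj[of n "g j"])
    then show ?thesis using gl[OF j, of "g j"] by simp
  qed
  then show "\<And>j. j < n \<Longrightarrow> cinner n (residual S f j) (residual S f j) = cnj (residual S f j j)"
    unfolding g_def .
  have "(\<Sum>j<n. cnj (g j j)) = (\<Sum>j<n. 1 - (\<Sum>i\<in>S. f i j * cnj (f i j)))"
    unfolding g_def' by simp
  also have "\<dots> = of_nat n - (\<Sum>i\<in>S. cinner n (f i) (f i))"
    unfolding cinner_def by (simp add: sum_subtractf sum.swap[of _ S] mult.commute)
  also have "(\<Sum>i\<in>S. cinner n (f i) (f i)) = of_nat (card S)"
    using o unfolding orthonormal_def by simp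
  finally show "(\<Sum>j<n. cnj (residual S f j j)) = of_nat n - of_nat (card S)" unfolding g_def .
qed

lemma orthonormal_complete:
  assumes o: "orthonormal n S f" and fin: "finite S" and c: "card S = n"
    and a: "a < n" and j: "j < n"
  shows "(\<Sum>i\<in>S. f i a * cnj (f i j)) = (if a = j then 1 else 0)"
proof -
  have "(\<Sum>j<n. Re (cnj (residual S f j j))) = 0"
    using arg_cong[OF residual_props(3)[OF o fin], of Re] c by (simp add: Re_sum)
  moreover have "\<forall>j\<in>{..<n}. Re (cnj (residual S f j j)) \<ge> 0"
    using residual_props(2)[OF o fin] cinner_self_ge0(1) by (metis lessThan_iff)
  ultimately have "Re (cnj (residual S f j j)) = 0"
    using sum_nonneg_eq_0_iff[of "{..<n}" "\<lambda>j. Re (cnj (residual S f j j))"] j by auto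
  moreover have "Im (cnj (residual S f j j)) = 0"
    using residual_props(2)[OF o fin j] cinner_self_ge0[of n "residual S f j"] by simp
  ultimately have "cinner n (residual S f j) (residual S f j) = 0"
    using residual_props(2)[OF o fin j] by (simp add: complex_eq_iff)
  then have "residual S f j a = 0" using cinner_self_zero a by blast
  then have "(if a = j then 1 else 0) = (\<Sum>i\<in>S. cnj (f i j) * f i a)"
    unfolding residual_def by simp
  then show ?thesis by (simp add: mult.commute)
qed

lemma orthonormal_expand:
  assumes o: "orthonormal n S f" and fin: "finite S" and c: "card S = n" and a: "a < n"
  shows "(\<Sum>i\<in>S. cinner n (f i) v * f i a) = v a"
proof -
  have "(\<Sum>i\<in>S. cinner n (f i) v * f i a) = (\<Sum>i\<in>S. \<Sum>b<n. v b * (f i a * cnj (f i b)))"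
    unfolding cinner_def by (simp add: sum_distrib_left sum_distrib_right algebra_simps)
  also have "\<dots> = (\<Sum>b<n. \<Sum>i\<in>S. v b * (f i a * cnj (f i b)))" by (rule sum.swap)
  also have "\<dots> = (\<Sum>b<n. v b * (\<Sum>i\<in>S. f i a * cnj (f i b)))"
    by (simp add: sum_distrib_left)
  also have "\<dots> = (\<Sum>b<n. v b * (if a = b then 1 else 0))"
    using orthonormal_complete[OF o fin c a] by simp
  also have "\<dots> = v a" using a by (simp add: if_distrib cong: if_cong)
  finally show ?thesis .
qed

lemma orthonormal_extend_one:
  assumes o: "orthonormal n S f" and fin: "finite S" and c: "card S < n"
  shows "\<exists>g. cinner n g g = 1 \<and> (\<forall>i\<in>S. cinner n (f i) g = 0)"
proof -
  define g where "g = residual S f"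
  have "(\<Sum>j<n. cnj (g j j)) \<noteq> 0" using residual_props(3)[OF o fin] c unfolding g_def by simp
  then obtain j where j: "j < n" and "cnj (g j j) \<noteq> 0" by (meson sum.neutral lessThan_iff)
  then have "cinner n (g j) (g j) \<noteq> 0" using residual_props(2)[OF o fin j] unfolding g_def by simp
  then obtain c where "cinner n (\<lambda>a. c * g j a) (\<lambda>a. c * g j a) = 1" using normalize_vec by blast
  moreover have "cinner n (f i) (\<lambda>a. c * g j a) = 0" if "i \<in> S" for i
    using residual_props(1)[OF o fin that j] unfolding g_def by (simp add: cinner_scale2)
  ultimately show ?thesis by blast
qed

lemma orthonormal_extend_aux:
  assumes o: "orthonormal n S f" and finS: "finite S" and finD: "finite D"
  shows "D \<inter> S = {} \<Longrightarrow> card (S \<union> D) \<le> n \<Longrightarrow> \<exists>g. orthonormal n (S \<union> D) g \<and> (\<forall>i\<in>S. g i = f i)"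
  using finD
proof (induction D rule: finite_induct)
  case empty
  then show ?case using o by auto
next
  case (insert x D)
  have xn: "x \<notin> S \<union> D" using insert by auto
  have cardD: "card (S \<union> insert x D) = Suc (card (S \<union> D))"
    using xn finS insert(1) by simp
  then obtain g where g: "orthonormal n (S \<union> D) g" "\<forall>i\<in>S. g i = f i"
    using insert by auto
  have "card (S \<union> D) < n" using cardD insert by simp
  then obtain h where h: "cinner n h h = 1" "\<forall>i\<in>S \<union> D. cinner n (g i) h = 0"
    using orthonormal_extend_one[OF g(1)] finS insert(1) by blast
  define g' where "g' = g(x := h)"
  have "orthonormal n (S \<union> insert x D) g'"
    unfolding orthonormal_def
  proof (intro ballI)
    fix i j assume i: "i \<in> S \<union> insert x D" and j: "j \<in> S \<union> insert x D"
    show "cinner n (g' i) (g' j) = (if i = j then 1 else 0)"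
    proof (cases "i = x"; cases "j = x")
      assume "i = x" "j = x" then show ?thesis using h unfolding g'_def by simp
    next
      assume "i = x" "j \<noteq> x" then show ?thesis using h j xn cinner_cnj[of n h "g j"] unfolding g'_def
        by auto
    next
      assume "i \<noteq> x" "j = x" then show ?thesis using h i xn unfolding g'_def by auto
    next
      assume "i \<noteq> x" "j \<noteq> x" then show ?thesis using g(1) i j unfolding g'_def orthonormal_def by auto
    qed
  qed
  moreover have "\<forall>i\<in>S. g' i = f i" using g(2) xn unfolding g'_def by auto
  ultimately show ?case by blast
qed

lemma orthonormal_extend:
  assumes o: "orthonormal n S f" and finT: "finite T" and ST: "S \<subseteq> T" and c: "card T \<le> n"
  shows "\<exists>g. orthonormal n T g \<and> (\<forall>i\<in>S. g i = f i)"
proof -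
  have finS: "finite S" using ST finT finite_subset by blast
  have "S \<union> (T - S) = T" using ST by auto
  then show ?thesis
    using orthonormal_extend_aux[OF o finS, of "T - S"] finT c by auto
qed

lemma cinner_orthonormal_comb:
  assumes h: "orthonormal n J h" and J: "finite J"
  shows "cinner n (\<lambda>a. \<Sum>j\<in>J. z j * h j a) (\<lambda>a. \<Sum>j\<in>J. z j * h j a) = (\<Sum>j\<in>J. cnj (z j) * z j)"
proof -
  have "cinner n (\<lambda>a. \<Sum>j\<in>J. z j * h j a) (\<lambda>a. \<Sum>j\<in>J. z j * h j a)
      = (\<Sum>j\<in>J. cnj (z j) * (\<Sum>j'\<in>J. z j' * cinner n (h j) (h j')))"
    unfolding cinner_lin1 cinner_lin2 ..
  also have "\<dots> = (\<Sum>j\<in>J. cnj (z j) * z j)"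
  proof (intro sum.cong refl)
    fix j assume j: "j \<in> J"
    have "(\<Sum>j'\<in>J. z j' * cinner n (h j) (h j')) = (\<Sum>j'\<in>J. if j' = j then z j' else 0)"
      using h j unfolding orthonormal_def by (intro sum.cong) auto
    then show "cnj (z j) * (\<Sum>j'\<in>J. z j' * cinner n (h j) (h j')) = cnj (z j) * z j"
      using j J by simp
  qed
  finally show ?thesis .
qed

lemma hermitian_eigenvalue_real:
  assumes H: "H \<in> carrier_mat n n" "adj H = H" and y: "cinner n y y \<noteq> 0"
    and Hy: "\<And>a. a < n \<Longrightarrow> apply_mat H y a = m * y a"
  shows "m = of_real (Re m)"
proof -
  have "cinner n y (apply_mat H y) = cinner n (apply_mat H y) y" using cinner_herm[OF H] .
  moreover have "cinner n y (apply_mat H y) = m * cinner n y y"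
    using Hy by (subst cinner_cong2[of n _ "\<lambda>a. m * y a"]) (auto simp: cinner_scale2)
  moreover have "cinner n (apply_mat H y) y = cnj m * cinner n y y"
    using Hy by (subst cinner_cong1[of n _ "\<lambda>a. m * y a"]) (auto simp: cinner_scale1)
  ultimately have "m = cnj m" using y by simp
  then show ?thesis by (simp add: complex_eq_iff)
qed

(* For a Hermitian H, the orthogonal complement of eigenvectors is invariant: in an orthonormal
   basis g whose first r vectors are eigenvectors, H g_(r+j) expands in g_r, ..., g_(n-1) only. *)
lemma hermitian_complement_invariant:
  assumes H: "H \<in> carrier_mat n n" "adj H = H" and g: "orthonormal n {..<n} g" and rn: "r \<le> n"
    and eig: "\<And>i a. i < r \<Longrightarrow> a < n \<Longrightarrow> apply_mat H (g i) a = of_real (\<mu> i) * g i a"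
    and j: "j < n - r" and a: "a < n"
  shows "apply_mat H (g (r+j)) a = (\<Sum>i<n-r. cinner n (g (r+i)) (apply_mat H (g (r+j))) * g (r+i) a)"
proof -
  have "apply_mat H (g (r+j)) a = (\<Sum>i<n. cinner n (g i) (apply_mat H (g (r+j))) * g i a)"
    using orthonormal_expand[OF g _ _ a] by simp
  also have "\<dots> = (\<Sum>i<r. cinner n (g i) (apply_mat H (g (r+j))) * g i a)
      + (\<Sum>i<n-r. cinner n (g (r+i)) (apply_mat H (g (r+j))) * g (r+i) a)"
    using sum_split_at[of r n] rn by simp
  also have "(\<Sum>i<r. cinner n (g i) (apply_mat H (g (r+j))) * g i a) = 0"
  proof (intro sum.neutral ballI)
    fix i assume i: "i \<in> {..<r}"
    have "cinner n (g i) (apply_mat H (g (r+j))) = cinner n (apply_mat H (g i)) (g (r+j))"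
      using cinner_herm[OF H] by simp
    also have "\<dots> = cinner n (\<lambda>a. of_real (\<mu> i) * g i a) (g (r+j))"
      using eig i by (intro cinner_cong1) auto
    also have "\<dots> = 0" using g i j rn unfolding orthonormal_def by (simp add: cinner_scale1)
    finally show "cinner n (g i) (apply_mat H (g (r+j))) * g i a = 0" by simp
  qed
  finally show ?thesis by simp
qed

(* The compression of H to the complement has an eigenvector (over C), which is therefore an
   eigenvector of H orthogonal to the first r basis vectors. *)
lemma hermitian_complement_eigenvector:
  assumes H: "H \<in> carrier_mat n n" "adj H = H" and g: "orthonormal n {..<n} g" and rn: "r < n"
    and eig: "\<And>i a. i < r \<Longrightarrow> a < n \<Longrightarrow> apply_mat H (g i) a = of_real (\<mu> i) * g i a"
  obtains z m where "\<exists>j<n-r. z j \<noteq> 0"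
    and "\<And>a. a < n \<Longrightarrow> apply_mat H (\<lambda>a. \<Sum>j<n-r. z j * g (r+j) a) a = m * (\<Sum>j<n-r. z j * g (r+j) a)"
proof -
  define K where "K = mat (n-r) (n-r) (\<lambda>(i,j). cinner n (g (r+i)) (apply_mat H (g (r+j))))"
  have Kc: "K \<in> carrier_mat (n-r) (n-r)" unfolding K_def by simp
  from spectrum_non_empty[OF Kc] rn obtain m where "m \<in> spectrum K" by auto
  then obtain v where "eigenvector K v m" unfolding spectrum_def eigenvalue_def by auto
  then have vc: "v \<in> carrier_vec (n-r)" and v0: "v \<noteq> 0\<^sub>v (n-r)" and Kv: "K *\<^sub>v v = m \<cdot>\<^sub>v v"
    unfolding eigenvector_def using Kc by auto
  have Kv': "(\<Sum>j<n-r. K $$ (i,j) * v $ j) = m * v $ i" if i: "i < n - r" for i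
  proof -
    have "(K *\<^sub>v v) $ i = m * v $ i" using Kv i vc by simp
    then show ?thesis using i Kc vc by (simp add: scalar_prod_def atLeast0LessThan)
  qed
  have "\<exists>j<n-r. v $ j \<noteq> 0"
  proof (rule ccontr)
    assume "\<not> ?thesis"
    then have "v = 0\<^sub>v (n-r)" using vc by (intro eq_vecI) auto
    then show False using v0 by simp
  qed
  moreover have "apply_mat H (\<lambda>a. \<Sum>j<n-r. v $ j * g (r+j) a) a = m * (\<Sum>j<n-r. v $ j * g (r+j) a)"
    if a: "a < n" for a
  proof -
    have "apply_mat H (\<lambda>a. \<Sum>j<n-r. v $ j * g (r+j) a) a = (\<Sum>j<n-r. v $ j * apply_mat H (g (r+j)) a)"
      using apply_mat_lin[OF H(1), where c="\<lambda>j. v $ j" and w="\<lambda>j. g (r+j)" and J="{..<n-r}"] by simp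
    also have "\<dots> = (\<Sum>j<n-r. \<Sum>i<n-r. v $ j * (K $$ (i,j) * g (r+i) a))"
      using hermitian_complement_invariant[OF H g _ eig _ a] rn
      by (simp add: K_def sum_distrib_left)
    also have "\<dots> = (\<Sum>i<n-r. (\<Sum>j<n-r. K $$ (i,j) * v $ j) * g (r+i) a)"
      by (subst sum.swap) (simp add: sum_distrib_left sum_distrib_right ac_simps)
    also have "\<dots> = m * (\<Sum>j<n-r. v $ j * g (r+j) a)"
      using Kv' by (simp add: sum_distrib_left ac_simps)
    finally show ?thesis .
  qed
  ultimately show ?thesis by (rule that)
qed

lemma hermitian_spectral_step:
  assumes H: "H \<in> carrier_mat n n" "adj H = H" and o: "orthonormal n {..<r} f" and rn: "r < n"
    and eig: "\<forall>i<r. \<forall>a<n. apply_mat H (f i) a = of_real (\<mu> i) * f i a"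
  shows "\<exists>y m. cinner n y y = 1 \<and> (\<forall>i<r. cinner n (f i) y = 0) \<and> (\<forall>a<n. apply_mat H y a = of_real m * y a)"
proof -
  obtain g where g: "orthonormal n {..<n} g" "\<forall>i\<in>{..<r}. g i = f i"
    using orthonormal_extend[OF o, of "{..<n}"] rn by auto
  obtain z m where z: "\<exists>j<n-r. z j \<noteq> 0"
    and Hy: "\<And>a. a < n \<Longrightarrow> apply_mat H (\<lambda>a. \<Sum>j<n-r. z j * g (r+j) a) a = m * (\<Sum>j<n-r. z j * g (r+j) a)"
    by (rule hermitian_complement_eigenvector[OF H g(1) rn, of \<mu>]) (use eig g(2) in auto)
  define y where "y = (\<lambda>a. \<Sum>j<n-r. z j * g (r+j) a)"
  have "orthonormal n {..<n-r} (\<lambda>j. g (r+j))" using g(1) unfolding orthonormal_def by auto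
  then have "cinner n y y = (\<Sum>j<n-r. cnj (z j) * z j)"
    unfolding y_def by (rule cinner_orthonormal_comb) simp
  also have "\<dots> = cinner (n-r) z z" unfolding cinner_def ..
  also have "\<dots> \<noteq> 0" using z cinner_self_zero[of "n-r" z] by blast
  finally have ny: "cinner n y y \<noteq> 0" .
  have mreal: "m = of_real (Re m)"
    by (rule hermitian_eigenvalue_real[OF H ny]) (use Hy in \<open>simp add: y_def\<close>)
  have Hy': "apply_mat H y a = of_real (Re m) * y a" if "a < n" for a
    using Hy[OF that] mreal[symmetric] unfolding y_def by simp
  have orth: "cinner n (f k) y = 0" if k: "k < r" for k
  proof -
    have "cinner n (f k) y = (\<Sum>j<n-r. z j * cinner n (g k) (g (r+j)))"
      unfolding y_def cinner_lin2 using g(2) k by simp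
    also have "\<dots> = 0" using g(1) k rn unfolding orthonormal_def by (intro sum.neutral) auto
    finally show ?thesis .
  qed
  obtain c where c: "c \<noteq> 0" "cinner n (\<lambda>a. c * y a) (\<lambda>a. c * y a) = 1"
    using normalize_vec[OF ny] by blast
  show ?thesis
  proof (intro exI conjI allI impI)
    show "cinner n (\<lambda>a. c * y a) (\<lambda>a. c * y a) = 1" by fact
    show "cinner n (f i) (\<lambda>a. c * y a) = 0" if "i < r" for i using orth[OF that] by (simp add: cinner_scale2)
    show "apply_mat H (\<lambda>a. c * y a) a = of_real (Re m) * (c * y a)" if "a < n" for a
    proof -
      have "apply_mat H (\<lambda>a. c * y a) a = c * apply_mat H y a"
        unfolding apply_mat_def by (simp add: sum_distrib_left algebra_simps)
      then show ?thesis using Hy'[OF that] by (simp add: algebra_simps)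
    qed
  qed
qed

lemma hermitian_spectral_aux:
  assumes H: "H \<in> carrier_mat n n" "adj H = H"
  shows "r \<le> n \<Longrightarrow> \<exists>f \<mu>. orthonormal n {..<r} f \<and> (\<forall>i<r. \<forall>a<n. apply_mat H (f i) a = of_real (\<mu> i) * f i a)"
proof (induction r)
  case 0
  then show ?case by (auto simp: orthonormal_def)
next
  case (Suc r)
  then obtain f \<mu> where f: "orthonormal n {..<r} f" "\<forall>i<r. \<forall>a<n. apply_mat H (f i) a = of_real (\<mu> i) * f i a"
    by auto
  obtain y m where y: "cinner n y y = 1" "\<forall>i<r. cinner n (f i) y = 0" "\<forall>a<n. apply_mat H y a = of_real m * y a"
    using hermitian_spectral_step[OF H f(1) _ f(2)] Suc(2) by auto
  define f' where "f' = f(r := y)"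
  define \<mu>' where "\<mu>' = \<mu>(r := m)"
  have "orthonormal n {..<Suc r} f'"
    unfolding orthonormal_def
  proof (intro ballI)
    fix i j assume i: "i \<in> {..<Suc r}" and j: "j \<in> {..<Suc r}"
    show "cinner n (f' i) (f' j) = (if i = j then 1 else 0)"
    proof (cases "i = r"; cases "j = r")
      assume "i = r" "j = r" then show ?thesis using y unfolding f'_def by simp
    next
      assume a: "i = r" "j \<noteq> r"
      then have "cinner n y (f j) = cnj (cinner n (f j) y)" by (rule_tac cinner_cnj)
      then show ?thesis using y j a unfolding f'_def by auto
    next
      assume "i \<noteq> r" "j = r" then show ?thesis using y i unfolding f'_def by auto
    next
      assume "i \<noteq> r" "j \<noteq> r" then show ?thesis using f(1) i j unfolding f'_def orthonormal_def by auto
    qed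
  qed
  moreover have "\<forall>i<Suc r. \<forall>a<n. apply_mat H (f' i) a = of_real (\<mu>' i) * f' i a"
    using f(2) y(3) unfolding f'_def \<mu>'_def by (auto simp: less_Suc_eq)
  ultimately show ?case by blast
qed

lemma hermitian_spectral:
  assumes H: "H \<in> carrier_mat n n" "adj H = H"
  shows "\<exists>f \<mu>. orthonormal n {..<n} f \<and> (\<forall>i<n. \<forall>a<n. apply_mat H (f i) a = of_real (\<mu> i) * f i a)
     \<and> (\<forall>a<n. \<forall>b<n. H $$ (a,b) = (\<Sum>i<n. of_real (\<mu> i) * f i a * cnj (f i b)))"
proof -
  obtain f \<mu> where f: "orthonormal n {..<n} f" "\<forall>i<n. \<forall>a<n. apply_mat H (f i) a = of_real (\<mu> i) * f i a"
    using hermitian_spectral_aux[OF H, of n] by auto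
  have "H $$ (a,b) = (\<Sum>i<n. of_real (\<mu> i) * f i a * cnj (f i b))" if a: "a < n" and b: "b < n" for a b
  proof -
    have "H $$ (a,b) = (\<Sum>i<n. cinner n (f i) (\<lambda>c. H $$ (c,b)) * f i a)"
      using orthonormal_expand[OF f(1) _ _ a, of "\<lambda>c. H $$ (c,b)"] by simp
    also have "\<dots> = (\<Sum>i<n. of_real (\<mu> i) * f i a * cnj (f i b))"
    proof (intro sum.cong refl)
      fix i assume i: "i \<in> {..<n}"
      have "cinner n (f i) (\<lambda>c. H $$ (c,b)) = cnj (apply_mat H (f i) b)"
        unfolding cinner_def apply_mat_def using H hermitian_entry[OF H _ b]
        by (simp add: mult.commute)
      also have "\<dots> = of_real (\<mu> i) * cnj (f i b)" using f(2) i b by simp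
      finally show "cinner n (f i) (\<lambda>c. H $$ (c,b)) * f i a = of_real (\<mu> i) * f i a * cnj (f i b)"
        by simp
    qed
    finally show ?thesis .
  qed
  then show ?thesis using f by blast
qed

lemma psd_qf:
  assumes "psd n H"
  shows "Re (cinner n v (apply_mat H v)) \<ge> 0 \<and> Im (cinner n v (apply_mat H v)) = 0"
proof -
  have H: "H \<in> carrier_mat n n" using assms unfolding psd_def by auto
  let ?v = "vec n v"
  have all: "\<forall>v\<in>carrier_vec n. let q = (\<Sum>i<n. \<Sum>j<n. cnj (v $ i) * H $$ (i,j) * v $ j) in Im q = 0 \<and> 0 \<le> Re q"
    using assms unfolding psd_def by blast
  have "let q = (\<Sum>i<n. \<Sum>j<n. cnj (?v $ i) * H $$ (i,j) * ?v $ j) in Im q = 0 \<and> 0 \<le> Re q"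
    by (rule bspec[OF all]) simp
  moreover have eq: "(\<Sum>i<n. \<Sum>j<n. cnj (?v $ i) * H $$ (i,j) * ?v $ j) = cinner n v (apply_mat H v)"
    unfolding cinner_def apply_mat_def using H by (simp add: sum_distrib_left algebra_simps)
  ultimately show ?thesis unfolding Let_def eq by blast
qed

lemma psd_decomp:
  assumes "psd n H"
  shows "\<exists>f \<mu>. orthonormal n {..<n} f \<and> (\<forall>i<n. 0 \<le> \<mu> i)
     \<and> (\<forall>a<n. \<forall>b<n. H $$ (a,b) = (\<Sum>i<n. of_real (\<mu> i) * f i a * cnj (f i b)))"
proof -
  have H: "H \<in> carrier_mat n n" "adj H = H" using assms unfolding psd_def by auto
  obtain f \<mu> where f: "orthonormal n {..<n} f" "\<forall>i<n. \<forall>a<n. apply_mat H (f i) a = of_real (\<mu> i) * f i a"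
     "\<forall>a<n. \<forall>b<n. H $$ (a,b) = (\<Sum>i<n. of_real (\<mu> i) * f i a * cnj (f i b))"
    using hermitian_spectral[OF H] by blast
  have "0 \<le> \<mu> i" if i: "i < n" for i
  proof -
    have "cinner n (f i) (apply_mat H (f i)) = cinner n (f i) (\<lambda>a. of_real (\<mu> i) * f i a)"
      using f(2) i by (intro cinner_cong2) auto
    also have "\<dots> = of_real (\<mu> i)" using f(1) i unfolding orthonormal_def by (simp add: cinner_scale2)
    finally show ?thesis using psd_qf[OF assms, of "f i"] by simp
  qed
  then show ?thesis using f by blast
qed

lemma gram_psd: "psd N (mat N N (\<lambda>(k,j). \<Sum>l\<in>S. cnj (c l k) * c l j))"
proof -
  let ?G = "mat N N (\<lambda>(k,j). \<Sum>l\<in>S. cnj (c l k) * c l j)"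
  have "adj ?G = ?G"
    by (rule eq_matI) (auto simp: cnj_sum mult.commute)
  moreover have "Im q = 0 \<and> 0 \<le> Re q"
    if q: "q = (\<Sum>i<N. \<Sum>j<N. cnj (v $ i) * ?G $$ (i,j) * v $ j)" for v :: "complex vec" and q
  proof -
    define w where "w l = (\<Sum>j<N. c l j * v $ j)" for l
    have "q = (\<Sum>i<N. \<Sum>j<N. \<Sum>l\<in>S. cnj (c l i * v $ i) * (c l j * v $ j))"
      unfolding q by (intro sum.cong refl) (simp add: sum_distrib_left sum_distrib_right ac_simps)
    also have "\<dots> = (\<Sum>l\<in>S. \<Sum>i<N. \<Sum>j<N. cnj (c l i * v $ i) * (c l j * v $ j))"
      by (rule sum_rotate3)
    also have "\<dots> = (\<Sum>l\<in>S. cnj (w l) * w l)"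
      unfolding w_def by (simp add: cnj_sum sum_product)
    also have "\<dots> = (\<Sum>l\<in>S. of_real ((cmod (w l))^2))"
      by (intro sum.cong refl) (simp add: complex_norm_square mult.commute del: of_real_power)
    finally have "q = of_real (\<Sum>l\<in>S. (cmod (w l))^2)" by simp
    then show ?thesis by (simp add: sum_nonneg)
  qed
  ultimately show ?thesis unfolding psd_def by (auto simp: Let_def)
qed

lemma gram_diagonalise:
  fixes N :: nat
  assumes f: "orthonormal N {..<N} f"
    and \<Lambda>: "\<And>k j. k < N \<Longrightarrow> j < N \<Longrightarrow>
      (\<Sum>l\<in>S. cnj (c l k) * c l j) = (\<Sum>t<N. of_real (\<mu> t) * f t k * cnj (f t j))"
    and r: "r < N" and s: "s < N"
  shows "(\<Sum>l\<in>S. cnj (\<Sum>k<N. f r k * c l k) * (\<Sum>k<N. f s k * c l k)) = (if r = s then of_real (\<mu> r) else 0)"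
proof -
  have ff: "cinner N (f i) (f j) = (if i = j then 1 else 0)" if "i < N" "j < N" for i j
    using f that unfolding orthonormal_def by auto
  have "(\<Sum>l\<in>S. cnj (\<Sum>k<N. f r k * c l k) * (\<Sum>k<N. f s k * c l k))
      = (\<Sum>l\<in>S. \<Sum>k<N. \<Sum>j<N. cnj (f r k) * f s j * (cnj (c l k) * c l j))"
    unfolding cnj_sum sum_product by (intro sum.cong refl) (simp add: ac_simps)
  also have "\<dots> = (\<Sum>k<N. \<Sum>j<N. cnj (f r k) * f s j * (\<Sum>l\<in>S. cnj (c l k) * c l j))"
    by (subst sum_rotate3[symmetric]) (simp add: sum_distrib_left)
  also have "\<dots> = (\<Sum>k<N. \<Sum>j<N. \<Sum>t<N. of_real (\<mu> t) * ((cnj (f r k) * f t k) * (cnj (f t j) * f s j)))"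
    using \<Lambda> by (simp add: sum_distrib_left ac_simps)
  also have "\<dots> = (\<Sum>t<N. \<Sum>k<N. \<Sum>j<N. of_real (\<mu> t) * ((cnj (f r k) * f t k) * (cnj (f t j) * f s j)))"
    by (rule sum_rotate3)
  also have "\<dots> = (\<Sum>t<N. of_real (\<mu> t) * (cinner N (f r) (f t) * cinner N (f t) (f s)))"
    unfolding cinner_def sum_product by (simp add: sum_distrib_left)
  also have "\<dots> = (\<Sum>t<N. if t = r then (if r = s then of_real (\<mu> r) else 0) else 0)"
    using ff r s by (intro sum.cong refl) auto
  also have "\<dots> = (if r = s then of_real (\<mu> r) else 0)" using r by simp
  finally show ?thesis .
qed

definition kraus_map :: "nat \<Rightarrow> 'i set \<Rightarrow> ('i \<Rightarrow> complex mat) \<Rightarrow> complex mat \<Rightarrow> complex mat" where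
  "kraus_map n S K X = mat n n (\<lambda>(b,d). \<Sum>k\<in>S. \<Sum>a<n. \<Sum>c<n. K k $$ (b,a) * X $$ (a,c) * cnj (K k $$ (d,c)))"

lemma kraus_map_carrier[simp]: "kraus_map n S K X \<in> carrier_mat n n"
  unfolding kraus_map_def by simp

lemma kraus_map_dims[simp]: "dim_row (kraus_map n S K X) = n" "dim_col (kraus_map n S K X) = n"
  unfolding kraus_map_def by auto

lemma kraus_map_index: "b < n \<Longrightarrow> d < n \<Longrightarrow>
  kraus_map n S K X $$ (b,d) = (\<Sum>k\<in>S. \<Sum>a<n. \<Sum>c<n. K k $$ (b,a) * X $$ (a,c) * cnj (K k $$ (d,c)))"
  unfolding kraus_map_def by simp

definition kraus_complete :: "nat \<Rightarrow> 'i set \<Rightarrow> ('i \<Rightarrow> complex mat) \<Rightarrow> bool" where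
  "kraus_complete n S K \<longleftrightarrow> (\<forall>a<n. \<forall>c<n. (\<Sum>k\<in>S. \<Sum>b<n. cnj (K k $$ (b,a)) * K k $$ (b,c)) = (if a = c then 1 else 0))"

lemma kraus_map_lin: "lin_map n (kraus_map n S K)"
  unfolding lin_map_def
proof (intro conjI ballI allI)
  fix A B :: "complex mat" assume A: "A \<in> carrier_mat n n" and B: "B \<in> carrier_mat n n"
  show "kraus_map n S K (A + B) = kraus_map n S K A + kraus_map n S K B"
    by (rule eq_matI) (use A B in \<open>auto simp: kraus_map_index algebra_simps sum.distrib\<close>)
next
  fix A :: "complex mat" and c assume A: "A \<in> carrier_mat n n"
  show "kraus_map n S K (c \<cdot>\<^sub>m A) = c \<cdot>\<^sub>m kraus_map n S K A"
    by (rule eq_matI) (use A in \<open>auto simp: kraus_map_index algebra_simps sum_distrib_left\<close>)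
qed simp

lemma kraus_map_tp:
  assumes tp: "kraus_complete n S K"
  shows "trace_preserving n (kraus_map n S K)"
  unfolding trace_preserving_def
proof
  fix X :: "complex mat" assume X: "X \<in> carrier_mat n n"
  have "mtrace (kraus_map n S K X) = (\<Sum>b<n. \<Sum>k\<in>S. \<Sum>a<n. \<Sum>c<n. K k $$ (b,a) * X $$ (a,c) * cnj (K k $$ (b,c)))"
    unfolding mtrace_def by (simp add: kraus_map_index)
  also have "\<dots> = (\<Sum>a<n. \<Sum>c<n. \<Sum>b<n. \<Sum>k\<in>S. K k $$ (b,a) * X $$ (a,c) * cnj (K k $$ (b,c)))"
    by (rule sum_swap_pairs)
  also have "\<dots> = (\<Sum>a<n. \<Sum>c<n. X $$ (a,c) * (\<Sum>k\<in>S. \<Sum>b<n. cnj (K k $$ (b,c)) * K k $$ (b,a)))"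
    by (intro sum.cong refl) (subst sum.swap, simp add: sum_distrib_left ac_simps)
  also have "\<dots> = (\<Sum>a<n. \<Sum>c<n. X $$ (a,c) * (if c = a then 1 else 0))"
    using tp unfolding kraus_complete_def by simp
  also have "\<dots> = mtrace X" unfolding mtrace_def using X by (simp add: if_distrib cong: if_cong)
  finally show "mtrace (kraus_map n S K X) = mtrace X" .
qed

lemma psd_kraus_map:
  assumes M: "psd N M"
  shows "psd N (kraus_map N S W M)"
proof -
  have Mc: "M \<in> carrier_mat N N" and Mh: "adj M = M" using M unfolding psd_def by auto
  have hM: "cnj (M $$ (p,q)) = M $$ (q,p)" if "p < N" "q < N" for p q
    using hermitian_entry[OF Mc Mh that(2) that(1)] by simp
  have herm: "adj (kraus_map N S W M) = kraus_map N S W M"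
  proof (rule eq_matI)
    fix i j assume i: "i < dim_row (kraus_map N S W M)" and j: "j < dim_col (kraus_map N S W M)"
    then have i: "i < N" and j: "j < N" by auto
    have "adj (kraus_map N S W M) $$ (i,j) = cnj (kraus_map N S W M $$ (j,i))" using i j by simp
    also have "\<dots> = (\<Sum>k\<in>S. \<Sum>a<N. \<Sum>c<N. cnj (W k $$ (j,a)) * M $$ (c,a) * W k $$ (i,c))"
      using i j hM by (simp add: kraus_map_index cnj_sum)
    also have "\<dots> = (\<Sum>k\<in>S. \<Sum>c<N. \<Sum>a<N. W k $$ (i,c) * M $$ (c,a) * cnj (W k $$ (j,a)))"
      by (rule sum.cong[OF refl], rule trans[OF sum.swap], intro sum.cong refl, simp add: ac_simps)
    also have "\<dots> = kraus_map N S W M $$ (i,j)" using i j by (simp add: kraus_map_index)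
    finally show "adj (kraus_map N S W M) $$ (i,j) = kraus_map N S W M $$ (i,j)" .
  qed auto
  have qf: "Im q = 0 \<and> 0 \<le> Re q"
    if v: "v \<in> carrier_vec N" and q: "q = (\<Sum>i<N. \<Sum>j<N. cnj (v $ i) * kraus_map N S W M $$ (i,j) * v $ j)" for v q
  proof -
    define u where "u k = (\<lambda>p. \<Sum>i<N. cnj (W k $$ (i,p)) * v $ i)" for k
    have "q = (\<Sum>i<N. \<Sum>j<N. \<Sum>k\<in>S. \<Sum>p<N. \<Sum>r<N. cnj (v $ i) * W k $$ (i,p) * M $$ (p,r) * cnj (W k $$ (j,r)) * v $ j)"
      unfolding q by (intro sum.cong refl) (simp add: kraus_map_index sum_distrib_left sum_distrib_right ac_simps)
    also have "\<dots> = (\<Sum>k\<in>S. \<Sum>i<N. \<Sum>j<N. \<Sum>p<N. \<Sum>r<N. cnj (v $ i) * W k $$ (i,p) * M $$ (p,r) * cnj (W k $$ (j,r)) * v $ j)"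
      by (rule sum_rotate3)
    also have "\<dots> = (\<Sum>k\<in>S. \<Sum>p<N. \<Sum>r<N. \<Sum>i<N. \<Sum>j<N. cnj (v $ i) * W k $$ (i,p) * M $$ (p,r) * cnj (W k $$ (j,r)) * v $ j)"
      by (rule sum.cong[OF refl]) (rule sum_swap_pairs)
    also have "\<dots> = (\<Sum>k\<in>S. \<Sum>p<N. \<Sum>r<N. \<Sum>j<N. \<Sum>i<N. cnj (v $ i) * W k $$ (i,p) * M $$ (p,r) * cnj (W k $$ (j,r)) * v $ j)"
      by (rule sum.cong[OF refl], rule sum.cong[OF refl], rule sum.cong[OF refl], rule sum.swap)
    also have "\<dots> = (\<Sum>k\<in>S. cinner N (u k) (apply_mat M (u k)))"
      unfolding cinner_def apply_mat_def u_def using Mc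
      by (intro sum.cong refl) (simp add: cnj_sum sum_distrib_left sum_distrib_right ac_simps)
    finally have qe: "q = (\<Sum>k\<in>S. cinner N (u k) (apply_mat M (u k)))" .
    have "Im (cinner N (u k) (apply_mat M (u k))) = 0 \<and> 0 \<le> Re (cinner N (u k) (apply_mat M (u k)))" for k
      using psd_qf[OF M] by simp
    then show ?thesis unfolding qe by (simp add: Im_sum Re_sum sum_nonneg)
  qed
  show ?thesis unfolding psd_def using herm qf by (auto simp: Let_def)
qed

(* The block-diagonal operator I_k \<otimes> A on C^k \<otimes> C^n. *)
definition block_diag :: "nat \<Rightarrow> nat \<Rightarrow> complex mat \<Rightarrow> complex mat" where
  "block_diag k n A = mat (k*n) (k*n) (\<lambda>(i,j). if i div n = j div n then A $$ (i mod n, j mod n) else 0)"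

lemma block_diag_index:
  assumes "i < k*n" "p < k*n"
  shows "block_diag k n A $$ (i,p) = (if p div n = i div n then A $$ (i mod n, p mod n) else 0)"
    "cnj (block_diag k n A $$ (i,p)) = (if p div n = i div n then cnj (A $$ (i mod n, p mod n)) else 0)"
  using assms unfolding block_diag_def by auto

lemma lift_kraus_map:
  "lift k n (kraus_map n S K) M = kraus_map (k*n) S (\<lambda>l. block_diag k n (K l)) M"
proof (rule eq_matI)
  fix i j assume "i < dim_row (kraus_map (k*n) S (\<lambda>l. block_diag k n (K l)) M)"
    "j < dim_col (kraus_map (k*n) S (\<lambda>l. block_diag k n (K l)) M)"
  then have i: "i < k*n" and j: "j < k*n" by auto
  have im: "i mod n < n" and jm: "j mod n < n" using i j
    by (metis mod_less_divisor mult_0_right neq0_conv not_less0)+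
  have "kraus_map (k*n) S (\<lambda>l. block_diag k n (K l)) M $$ (i,j)
    = (\<Sum>l\<in>S. \<Sum>p<k*n. (if p div n = i div n then K l $$ (i mod n, p mod n) else 0)
          * (\<Sum>q<k*n. (if q div n = j div n then cnj (K l $$ (j mod n, q mod n)) else 0) * M $$ (p,q)))"
    (is "_ = ?rhs")
  proof -
    have "kraus_map (k*n) S (\<lambda>l. block_diag k n (K l)) M $$ (i,j) = (\<Sum>l\<in>S. \<Sum>p<k*n. block_diag k n (K l) $$ (i,p)
          * (\<Sum>q<k*n. cnj (block_diag k n (K l) $$ (j,q)) * M $$ (p,q)))"
      using i j by (simp add: kraus_map_index sum_distrib_left ac_simps)
    also have "\<dots> = ?rhs"
      using i j by (intro sum.cong refl) (simp add: block_diag_index if_distrib[of cnj] cong: if_cong)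
    finally show ?thesis .
  qed
  also have "\<dots> = (\<Sum>l\<in>S. \<Sum>p<k*n. (if p div n = i div n then K l $$ (i mod n, p mod n) else 0)
          * (\<Sum>y<n. cnj (K l $$ (j mod n, y)) * M $$ (p, (j div n)*n + y)))"
  proof -
    have "(\<Sum>q<k*n. (if q div n = j div n then cnj (K l $$ (j mod n, q mod n)) else 0) * M $$ (p,q))
       = (\<Sum>y<n. cnj (K l $$ (j mod n, y)) * M $$ (p, (j div n)*n + y))" for l p
      using sum_block[OF j, of "\<lambda>y. cnj (K l $$ (j mod n, y))" "\<lambda>q. M $$ (p,q)"] by simp
    then show ?thesis by simp
  qed
  also have "\<dots> = (\<Sum>l\<in>S. \<Sum>x<n. K l $$ (i mod n, x)
          * (\<Sum>y<n. cnj (K l $$ (j mod n, y)) * M $$ ((i div n)*n + x, (j div n)*n + y)))"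
  proof -
    have "(\<Sum>p<k*n. (if p div n = i div n then K l $$ (i mod n, p mod n) else 0)
          * (\<Sum>y<n. cnj (K l $$ (j mod n, y)) * M $$ (p, (j div n)*n + y)))
       = (\<Sum>x<n. K l $$ (i mod n, x)
          * (\<Sum>y<n. cnj (K l $$ (j mod n, y)) * M $$ ((i div n)*n + x, (j div n)*n + y)))" for l
      using sum_block[OF i, of "\<lambda>x. K l $$ (i mod n, x)"
          "\<lambda>p. (\<Sum>y<n. cnj (K l $$ (j mod n, y)) * M $$ (p, (j div n)*n + y))"] by simp
    then show ?thesis by simp
  qed
  also have "\<dots> = lift k n (kraus_map n S K) M $$ (i,j)"
    unfolding lift_def using i j im jm
    by (simp add: kraus_map_index sum_distrib_left ac_simps)
  finally show "lift k n (kraus_map n S K) M $$ (i,j) = kraus_map (k*n) S (\<lambda>l. block_diag k n (K l)) M $$ (i,j)" ..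
qed (auto simp: lift_def)

lemma kraus_map_cp: "completely_positive n (kraus_map n S K)"
  unfolding completely_positive_def lift_kraus_map using psd_kraus_map by blast

lemma kraus_map_channel: "kraus_complete n S K \<Longrightarrow> quantum_channel n (kraus_map n S K)"
  unfolding quantum_channel_def using kraus_map_lin kraus_map_tp kraus_map_cp by blast

definition kraus_kernel :: "'i set \<Rightarrow> ('i \<Rightarrow> complex mat) \<Rightarrow> nat \<Rightarrow> nat \<Rightarrow> nat \<Rightarrow> nat \<Rightarrow> complex" where
  "kraus_kernel S K b a d c = (\<Sum>k\<in>S. K k $$ (b,a) * cnj (K k $$ (d,c)))"

lemma kraus_map_alt:
  assumes "b < n" "d < n"
  shows "kraus_map n S K X $$ (b,d) = (\<Sum>a<n. \<Sum>c<n. X $$ (a,c) * kraus_kernel S K b a d c)"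
proof -
  have "kraus_map n S K X $$ (b,d) = (\<Sum>k\<in>S. \<Sum>a<n. \<Sum>c<n. K k $$ (b,a) * X $$ (a,c) * cnj (K k $$ (d,c)))"
    using kraus_map_index[OF assms] .
  also have "\<dots> = (\<Sum>a<n. \<Sum>c<n. \<Sum>k\<in>S. K k $$ (b,a) * X $$ (a,c) * cnj (K k $$ (d,c)))"
    by (rule sum_rotate3[symmetric])
  also have "\<dots> = (\<Sum>a<n. \<Sum>c<n. X $$ (a,c) * kraus_kernel S K b a d c)"
    unfolding kraus_kernel_def by (simp add: sum_distrib_left ac_simps)
  finally show ?thesis .
qed

lemma kraus_map_kernel_eq:
  assumes "\<And>b a d c. b < n \<Longrightarrow> a < n \<Longrightarrow> d < n \<Longrightarrow> c < n \<Longrightarrow> kraus_kernel S K b a d c = kraus_kernel T K' b a d c"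
  shows "kraus_map n S K X = kraus_map n T K' X"
  by (rule eq_matI) (auto simp: kraus_map_alt assms)

lemma kraus_kernel_comp:
  assumes L: "\<And>l. l \<in> S \<Longrightarrow> L l \<in> carrier_mat n n" and K: "\<And>k. k \<in> T \<Longrightarrow> K k \<in> carrier_mat n n"
    and b: "b < n" and a: "a < n" and d: "d < n" and c: "c < n"
  shows "kraus_kernel (S \<times> T) (\<lambda>(l,k). L l * K k) b a d c
     = (\<Sum>l\<in>S. \<Sum>x<n. \<Sum>y<n. L l $$ (b,x) * kraus_kernel T K x a y c * cnj (L l $$ (d,y)))"
proof -
  have "kraus_kernel (S \<times> T) (\<lambda>(l,k). L l * K k) b a d c
      = (\<Sum>l\<in>S. \<Sum>k\<in>T. (L l * K k) $$ (b,a) * cnj ((L l * K k) $$ (d,c)))"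
    unfolding kraus_kernel_def sum.cartesian_product by (intro sum.cong refl) (auto split: prod.splits)
  also have "\<dots> = (\<Sum>l\<in>S. \<Sum>k\<in>T. \<Sum>x<n. \<Sum>y<n. L l $$ (b,x) * K k $$ (x,a) * cnj (K k $$ (y,c)) * cnj (L l $$ (d,y)))"
  proof (intro sum.cong refl)
    fix l k assume l: "l \<in> S" and k: "k \<in> T"
    show "(L l * K k) $$ (b,a) * cnj ((L l * K k) $$ (d,c))
        = (\<Sum>x<n. \<Sum>y<n. L l $$ (b,x) * K k $$ (x,a) * cnj (K k $$ (y,c)) * cnj (L l $$ (d,y)))"
      using mult_mat_entry[OF L[OF l] K[OF k] b a] mult_mat_entry[OF L[OF l] K[OF k] d c]
      by (simp add: sum_product cnj_sum ac_simps)
  qed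
  also have "\<dots> = (\<Sum>l\<in>S. \<Sum>x<n. \<Sum>y<n. \<Sum>k\<in>T. L l $$ (b,x) * K k $$ (x,a) * cnj (K k $$ (y,c)) * cnj (L l $$ (d,y)))"
    by (rule sum.cong[OF refl], rule sum_swap_inner)
  also have "\<dots> = (\<Sum>l\<in>S. \<Sum>x<n. \<Sum>y<n. L l $$ (b,x) * kraus_kernel T K x a y c * cnj (L l $$ (d,y)))"
    unfolding kraus_kernel_def by (simp add: sum_distrib_left sum_distrib_right ac_simps)
  finally show ?thesis .
qed

lemma kraus_map_comp:
  assumes L: "\<And>l. l \<in> S \<Longrightarrow> L l \<in> carrier_mat n n" and K: "\<And>k. k \<in> T \<Longrightarrow> K k \<in> carrier_mat n n"
  shows "kraus_map n S L (kraus_map n T K Y) = kraus_map n (S \<times> T) (\<lambda>(l,k). L l * K k) Y"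
proof (rule eq_matI)
  fix b d assume "b < dim_row (kraus_map n (S \<times> T) (\<lambda>(l,k). L l * K k) Y)" "d < dim_col (kraus_map n (S \<times> T) (\<lambda>(l,k). L l * K k) Y)"
  then have b: "b < n" and d: "d < n" by auto
  have "kraus_map n S L (kraus_map n T K Y) $$ (b,d)
     = (\<Sum>l\<in>S. \<Sum>x<n. \<Sum>y<n. L l $$ (b,x) * (\<Sum>a<n. \<Sum>c<n. Y $$ (a,c) * kraus_kernel T K x a y c) * cnj (L l $$ (d,y)))"
    unfolding kraus_map_index[OF b d] by (intro sum.cong refl) (simp add: kraus_map_alt)
  also have "\<dots> = (\<Sum>l\<in>S. \<Sum>x<n. \<Sum>y<n. \<Sum>a<n. \<Sum>c<n. Y $$ (a,c) * (L l $$ (b,x) * kraus_kernel T K x a y c * cnj (L l $$ (d,y))))"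
    by (simp add: sum_distrib_left sum_distrib_right ac_simps)
  also have "\<dots> = (\<Sum>l\<in>S. \<Sum>a<n. \<Sum>c<n. \<Sum>x<n. \<Sum>y<n. Y $$ (a,c) * (L l $$ (b,x) * kraus_kernel T K x a y c * cnj (L l $$ (d,y))))"
    by (rule sum.cong[OF refl], rule sum_swap_pairs)
  also have "\<dots> = (\<Sum>a<n. \<Sum>c<n. \<Sum>l\<in>S. \<Sum>x<n. \<Sum>y<n. Y $$ (a,c) * (L l $$ (b,x) * kraus_kernel T K x a y c * cnj (L l $$ (d,y))))"
    by (rule sum_rotate3[symmetric])
  also have "\<dots> = (\<Sum>a<n. \<Sum>c<n. Y $$ (a,c) * kraus_kernel (S \<times> T) (\<lambda>(l,k). L l * K k) b a d c)"
    by (intro sum.cong refl) (simp add: kraus_kernel_comp[OF L K b _ d] sum_distrib_left)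
  also have "\<dots> = kraus_map n (S \<times> T) (\<lambda>(l,k). L l * K k) Y $$ (b,d)"
    by (rule kraus_map_alt[OF b d, symmetric])
  finally show "kraus_map n S L (kraus_map n T K Y) $$ (b,d) = kraus_map n (S \<times> T) (\<lambda>(l,k). L l * K k) Y $$ (b,d)" .
qed auto

lemma kraus_map_single:
  assumes W: "W \<in> carrier_mat n n" and X: "X \<in> carrier_mat n n"
  shows "kraus_map n {u} (\<lambda>_. W) X = W * X * adj W"
proof (rule eq_matI)
  fix b d assume "b < dim_row (W * X * adj W)" "d < dim_col (W * X * adj W)"
  then have b: "b < n" and d: "d < n" using W by auto
  have WX: "W * X \<in> carrier_mat n n" using W X by simp
  have "(W * X * adj W) $$ (b,d) = (\<Sum>c<n. (\<Sum>a<n. W $$ (b,a) * X $$ (a,c)) * cnj (W $$ (d,c)))"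
    using mult_mat_entry[OF WX adj_carrier[OF W] b d] mult_mat_entry[OF W X b] W d by simp
  also have "\<dots> = (\<Sum>a<n. \<Sum>c<n. W $$ (b,a) * X $$ (a,c) * cnj (W $$ (d,c)))"
    by (simp add: sum_distrib_right) (rule sum.swap)
  finally show "kraus_map n {u} (\<lambda>_. W) X $$ (b,d) = (W * X * adj W) $$ (b,d)"
    using b d by (simp add: kraus_map_index)
qed (use W in auto)

lemma kraus_map_reindex:
  assumes "bij_betw h A B"
  shows "kraus_map n B K X = kraus_map n A (\<lambda>i. K (h i)) X"
  by (rule kraus_map_kernel_eq) (simp add: kraus_kernel_def sum.reindex_bij_betw[OF assms, symmetric])

lemma kraus_map_sandwich:
  assumes K: "\<And>k. k \<in> T \<Longrightarrow> K k \<in> carrier_mat n n"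
    and W: "W \<in> carrier_mat n n" and X: "X \<in> carrier_mat n n"
  shows "kraus_map n T K (W * X * adj W) = kraus_map n T (\<lambda>k. K k * W) X"
proof -
  have "kraus_map n T K (W * X * adj W) = kraus_map n T K (kraus_map n {()} (\<lambda>_. W) X)"
    using kraus_map_single[OF W X, where u="()"] by simp
  also have "\<dots> = kraus_map n (T \<times> {()}) (\<lambda>(l,k). K l * W) X"
    by (rule kraus_map_comp) (use K W in auto)
  also have "\<dots> = kraus_map n T (\<lambda>k. K k * W) X"
    by (subst kraus_map_reindex[of "\<lambda>k. (k,())" T]) (auto simp: bij_betw_def inj_on_def)
  finally show ?thesis .
qed

(* Unitary freedom: mixing Kraus operators by the rows of a unitary (given by a complete
   orthonormal family f) does not change the kernel. *)
lemma kraus_kernel_mix: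
  assumes f: "orthonormal N {..<N} f" and b: "b < n" and a: "a < n" and d: "d < n" and c: "c < n"
  shows "kraus_kernel {..<N} (\<lambda>r. mat_comb n N (f r) F) b a d c = kraus_kernel {..<N} F b a d c"
proof -
  have "kraus_kernel {..<N} (\<lambda>r. mat_comb n N (f r) F) b a d c
     = (\<Sum>r<N. \<Sum>k<N. \<Sum>j<N. f r k * cnj (f r j) * (F k $$ (b,a) * cnj (F j $$ (d,c))))"
    unfolding kraus_kernel_def using b a d c by (simp add: mat_comb_index sum_product cnj_sum ac_simps)
  also have "\<dots> = (\<Sum>k<N. \<Sum>j<N. (\<Sum>r<N. f r k * cnj (f r j)) * (F k $$ (b,a) * cnj (F j $$ (d,c))))"
    by (subst sum_rotate3[symmetric]) (simp add: sum_distrib_right)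
  also have "\<dots> = (\<Sum>k<N. \<Sum>j<N. if j = k then F k $$ (b,a) * cnj (F j $$ (d,c)) else 0)"
    using orthonormal_complete[OF f] by (intro sum.cong refl) auto
  also have "\<dots> = kraus_kernel {..<N} F b a d c" unfolding kraus_kernel_def by simp
  finally show ?thesis .
qed

lemma kraus_map_as_sum:
  assumes K: "\<And>k. k \<in> S \<Longrightarrow> K k \<in> carrier_mat n n" and X: "X \<in> carrier_mat n n"
    and b: "b < n" and d: "d < n"
  shows "kraus_map n S K X $$ (b,d) = (\<Sum>k\<in>S. (K k * X * adj (K k)) $$ (b,d))"
proof -
  have "(K k * X * adj (K k)) $$ (b,d) = (\<Sum>a<n. \<Sum>c<n. K k $$ (b,a) * X $$ (a,c) * cnj (K k $$ (d,c)))"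
    if k: "k \<in> S" for k
  proof -
    have "(K k * X * adj (K k)) $$ (b,d) = kraus_map n {k} (\<lambda>_. K k) X $$ (b,d)"
      using kraus_map_single[OF K[OF k] X, where u=k] by simp
    also have "\<dots> = (\<Sum>a<n. \<Sum>c<n. K k $$ (b,a) * X $$ (a,c) * cnj (K k $$ (d,c)))"
      using b d by (simp add: kraus_map_index)
    finally show ?thesis .
  qed
  then show ?thesis using b d by (simp add: kraus_map_index)
qed

lemma kraus_map_trace:
  assumes K: "\<And>k. k \<in> S \<Longrightarrow> K k \<in> carrier_mat n n"
  shows "mtrace (kraus_map n S K X) = (\<Sum>a<n. \<Sum>c<n. X $$ (a,c) * (\<Sum>k\<in>S. (adj (K k) * K k) $$ (c,a)))"
proof -
  have "mtrace (kraus_map n S K X) = (\<Sum>b<n. \<Sum>k\<in>S. \<Sum>a<n. \<Sum>c<n. K k $$ (b,a) * X $$ (a,c) * cnj (K k $$ (b,c)))"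
    unfolding mtrace_def by (simp add: kraus_map_index)
  also have "\<dots> = (\<Sum>a<n. \<Sum>c<n. \<Sum>b<n. \<Sum>k\<in>S. K k $$ (b,a) * X $$ (a,c) * cnj (K k $$ (b,c)))"
    by (rule sum_swap_pairs)
  also have "\<dots> = (\<Sum>a<n. \<Sum>c<n. X $$ (a,c) * (\<Sum>k\<in>S. (adj (K k) * K k) $$ (c,a)))"
  proof (intro sum.cong refl)
    fix a c assume a: "a \<in> {..<n}" and c: "c \<in> {..<n}"
    have "(\<Sum>k\<in>S. (adj (K k) * K k) $$ (c,a)) = (\<Sum>k\<in>S. \<Sum>b<n. cnj (K k $$ (b,c)) * K k $$ (b,a))"
    proof (intro sum.cong refl)
      fix k assume k: "k \<in> S"
      show "(adj (K k) * K k) $$ (c,a) = (\<Sum>b<n. cnj (K k $$ (b,c)) * K k $$ (b,a))"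
        using mult_mat_entry[OF adj_carrier[OF K[OF k]] K[OF k]] a c K[OF k] by simp
    qed
    then show "(\<Sum>b<n. \<Sum>k\<in>S. K k $$ (b,a) * X $$ (a,c) * cnj (K k $$ (b,c)))
       = X $$ (a,c) * (\<Sum>k\<in>S. (adj (K k) * K k) $$ (c,a))"
      by (subst sum.swap) (simp add: sum_distrib_left ac_simps)
  qed
  finally show ?thesis .
qed

lemma kraus_map_mat_comb:
  "kraus_map n S K (mat_comb n m c Y) = mat_comb n m c (\<lambda>j. kraus_map n S K (Y j))"
proof (rule eq_matI)
  fix x y assume "x < dim_row (mat_comb n m c (\<lambda>j. kraus_map n S K (Y j)))"
    "y < dim_col (mat_comb n m c (\<lambda>j. kraus_map n S K (Y j)))"
  then have x: "x < n" and y: "y < n" by auto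
  have "kraus_map n S K (mat_comb n m c Y) $$ (x,y)
      = (\<Sum>a<n. \<Sum>b<n. \<Sum>j<m. c j * (Y j $$ (a,b) * kraus_kernel S K x a y b))"
    unfolding kraus_map_alt[OF x y]
    by (intro sum.cong refl) (simp add: mat_comb_index sum_distrib_left sum_distrib_right ac_simps)
  also have "\<dots> = (\<Sum>j<m. \<Sum>a<n. \<Sum>b<n. c j * (Y j $$ (a,b) * kraus_kernel S K x a y b))"
    by (rule sum_rotate3)
  also have "\<dots> = mat_comb n m c (\<lambda>j. kraus_map n S K (Y j)) $$ (x,y)"
    unfolding mat_comb_index[OF x y] kraus_map_alt[OF x y] by (simp add: sum_distrib_left ac_simps)
  finally show "kraus_map n S K (mat_comb n m c Y) $$ (x,y) = mat_comb n m c (\<lambda>j. kraus_map n S K (Y j)) $$ (x,y)" .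
qed auto

lemma mixed_unitary_mat_comb:
  "mixed_unitary n m p U \<rho> = mat_comb n m (\<lambda>i. of_real (p i)) (\<lambda>i. U i * \<rho> * adj (U i))"
  unfolding mixed_unitary_def mat_comb_def ..

lemma kraus_map_drop_zero:
  assumes "T \<subseteq> S" and "finite S" and "\<And>k. k \<in> S - T \<Longrightarrow> K k = 0\<^sub>m n n"
  shows "kraus_map n S K X = kraus_map n T K X"
proof (rule kraus_map_kernel_eq)
  fix b a d c assume "b < n" "a < n" "d < n" "c < n"
  then show "kraus_kernel S K b a d c = kraus_kernel T K b a d c"
    unfolding kraus_kernel_def using assms by (intro sum.mono_neutral_right) auto
qed

lemma kraus_map_single_branch:
  assumes L: "\<And>k. k \<in> S \<Longrightarrow> L k \<in> carrier_mat n n" and fin: "finite S" and j: "j \<in> S"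
    and W: "W \<in> carrier_mat n n" and Pc: "P \<in> carrier_mat n n" and \<rho>: "\<rho> \<in> carrier_mat n n"
    and LW: "\<And>k. k \<in> S \<Longrightarrow> L k * W = (if k = j then P else 0\<^sub>m n n)"
  shows "kraus_map n S L (W * \<rho> * adj W) = P * \<rho> * adj P"
proof -
  have "kraus_map n S L (W * \<rho> * adj W) = kraus_map n S (\<lambda>k. L k * W) \<rho>"
    by (rule kraus_map_sandwich[OF L W \<rho>])
  also have "\<dots> = kraus_map n {()} (\<lambda>_. P) \<rho>"
  proof (rule kraus_map_kernel_eq)
    fix b a d c assume bc: "b < n" "a < n" "d < n" "c < n"
    have "kraus_kernel S (\<lambda>k. L k * W) b a d c = (\<Sum>k\<in>S. if k = j then P $$ (b,a) * cnj (P $$ (d,c)) else 0)"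
      unfolding kraus_kernel_def using LW bc by (intro sum.cong refl) auto
    then show "kraus_kernel S (\<lambda>k. L k * W) b a d c = kraus_kernel {()} (\<lambda>_. P) b a d c"
      unfolding kraus_kernel_def using j fin by simp
  qed
  also have "\<dots> = P * \<rho> * adj P" by (rule kraus_map_single[OF Pc \<rho>])
  finally show ?thesis .
qed

lemma kraus_map_mixed_unitary:
  assumes H: "\<And>i. i < m \<Longrightarrow> H i \<in> carrier_mat n n" and U: "\<And>i. i < m \<Longrightarrow> U i \<in> carrier_mat n n"
    and \<rho>: "\<rho> \<in> carrier_mat n n"
    and terms: "\<And>i. i < m \<Longrightarrow> H i * \<rho> * adj (H i) = of_real (p i) \<cdot>\<^sub>m (U i * \<rho> * adj (U i))"
  shows "kraus_map n {..<m} H \<rho> = mixed_unitary n m p U \<rho>"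
proof (rule eq_matI)
  fix b d assume "b < dim_row (mixed_unitary n m p U \<rho>)" "d < dim_col (mixed_unitary n m p U \<rho>)"
  then have b: "b < n" and d: "d < n" unfolding mixed_unitary_def by auto
  have "kraus_map n {..<m} H \<rho> $$ (b,d) = (\<Sum>i<m. (H i * \<rho> * adj (H i)) $$ (b,d))"
    using kraus_map_as_sum[OF _ \<rho> b d, of "{..<m}" H] H by simp
  also have "\<dots> = (\<Sum>i<m. of_real (p i) * (U i * \<rho> * adj (U i)) $$ (b,d))"
  proof (intro sum.cong refl)
    fix i assume "i \<in> {..<m}"
    then have Ui: "U i \<in> carrier_mat n n" using U by simp
    show "(H i * \<rho> * adj (H i)) $$ (b,d) = of_real (p i) * (U i * \<rho> * adj (U i)) $$ (b,d)"
      using terms \<open>i \<in> {..<m}\<close> index_smult_mat(1)[of b "U i * \<rho> * adj (U i)" d] Ui b d by simp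
  qed
  finally show "kraus_map n {..<m} H \<rho> $$ (b,d) = mixed_unitary n m p U \<rho> $$ (b,d)"
    unfolding mixed_unitary_def using b d by simp
qed (auto simp: mixed_unitary_def)

lemma kraus_complete_adj_mult:
  assumes Lc: "kraus_complete n S L" and L: "\<And>l. l \<in> S \<Longrightarrow> L l \<in> carrier_mat n n"
    and A: "A \<in> carrier_mat n n" and B: "B \<in> carrier_mat n n" and a: "a < n" and b: "b < n"
  shows "(adj A * B) $$ (a,b) = (\<Sum>l\<in>S. (adj (L l * A) * (L l * B)) $$ (a,b))"
proof -
  have "(adj A * B) $$ (a,b) = (\<Sum>x<n. \<Sum>y<n. if y = x then cnj (A $$ (x,a)) * B $$ (y,b) else 0)"
    using mult_mat_entry[OF adj_carrier[OF A] B a b] A a by simp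
  also have "\<dots> = (\<Sum>x<n. \<Sum>y<n. \<Sum>l\<in>S. \<Sum>z<n. cnj (L l $$ (z,x)) * L l $$ (z,y) * (cnj (A $$ (x,a)) * B $$ (y,b)))"
  proof (intro sum.cong refl)
    fix x y assume "x \<in> {..<n}" "y \<in> {..<n}"
    then show "(if y = x then cnj (A $$ (x,a)) * B $$ (y,b) else 0)
        = (\<Sum>l\<in>S. \<Sum>z<n. cnj (L l $$ (z,x)) * L l $$ (z,y) * (cnj (A $$ (x,a)) * B $$ (y,b)))"
      using Lc unfolding kraus_complete_def by (auto simp flip: sum_distrib_right)
  qed
  also have "\<dots> = (\<Sum>l\<in>S. \<Sum>z<n. \<Sum>x<n. \<Sum>y<n. cnj (L l $$ (z,x)) * L l $$ (z,y) * (cnj (A $$ (x,a)) * B $$ (y,b)))"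
    by (rule sum_swap_pairs)
  also have "\<dots> = (\<Sum>l\<in>S. (adj (L l * A) * (L l * B)) $$ (a,b))"
  proof (intro sum.cong refl)
    fix l assume l: "l \<in> S"
    have LA: "L l * A \<in> carrier_mat n n" and LB: "L l * B \<in> carrier_mat n n" using L[OF l] A B by auto
    have "(adj (L l * A) * (L l * B)) $$ (a,b) = (\<Sum>z<n. cnj ((L l * A) $$ (z,a)) * (L l * B) $$ (z,b))"
      using mult_mat_entry[OF adj_carrier[OF LA] LB a b] L[OF l] A a by simp
    also have "\<dots> = (\<Sum>z<n. \<Sum>x<n. \<Sum>y<n. cnj (L l $$ (z,x) * A $$ (x,a)) * (L l $$ (z,y) * B $$ (y,b)))"
      using mult_mat_entry[OF L[OF l] A _ a] mult_mat_entry[OF L[OF l] B _ b]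
      by (simp add: cnj_sum sum_product)
    finally show "(\<Sum>z<n. \<Sum>x<n. \<Sum>y<n. cnj (L l $$ (z,x)) * L l $$ (z,y) * (cnj (A $$ (x,a)) * B $$ (y,b)))
        = (adj (L l * A) * (L l * B)) $$ (a,b)"
      by (simp add: ac_simps)
  qed
  finally show ?thesis .
qed

definition matrix_unit :: "nat \<Rightarrow> nat \<Rightarrow> nat \<Rightarrow> complex mat" where
  "matrix_unit n a c = mat n n (\<lambda>(x,y). if x = a \<and> y = c then 1 else 0)"

lemma matrix_unit_carrier[simp]: "matrix_unit n a c \<in> carrier_mat n n" unfolding matrix_unit_def by simp

lemma matrix_unit_dims[simp]: "dim_row (matrix_unit n a c) = n" "dim_col (matrix_unit n a c) = n" unfolding matrix_unit_def by simp_all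

lemma kraus_map_matrix_unit:
  assumes "x < n" "y < n" "a < n" "c < n"
  shows "kraus_map n S K (matrix_unit n a c) $$ (x,y) = kraus_kernel S K x a y c"
proof -
  have "kraus_map n S K (matrix_unit n a c) $$ (x,y) = (\<Sum>a'<n. \<Sum>c'<n. matrix_unit n a c $$ (a',c') * kraus_kernel S K x a' y c')"
    using kraus_map_alt[OF assms(1,2)] .
  also have "\<dots> = (\<Sum>a'<n. \<Sum>c'<n. if a' = a \<and> c' = c then kraus_kernel S K x a' y c' else 0)"
    by (intro sum.cong refl) (auto simp: matrix_unit_def)
  also have "\<dots> = (\<Sum>a'<n. if a' = a then kraus_kernel S K x a' y c else 0)"
    using assms by (intro sum.cong refl) auto
  also have "\<dots> = kraus_kernel S K x a y c" using assms by simp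
  finally show ?thesis .
qed

lemma matrix_unit_sandwich:
  assumes A: "A \<in> carrier_mat n n" and C: "C \<in> carrier_mat n n" and a: "a < n" and c: "c < n"
    and x: "x < n" and y: "y < n"
  shows "(A * matrix_unit n a c * C) $$ (x,y) = A $$ (x,a) * C $$ (c,y)"
proof -
  have Ae: "A * matrix_unit n a c \<in> carrier_mat n n" using A by simp
  have e1: "(A * matrix_unit n a c) $$ (x,z) = (if z = c then A $$ (x,a) else 0)" if z: "z < n" for z
  proof -
    have "(A * matrix_unit n a c) $$ (x,z) = (\<Sum>k<n. A $$ (x,k) * matrix_unit n a c $$ (k,z))"
      using mult_mat_entry[OF A matrix_unit_carrier x z] .
    also have "\<dots> = (\<Sum>k<n. if k = a then (if z = c then A $$ (x,a) else 0) else 0)"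
      using z by (intro sum.cong refl) (auto simp: matrix_unit_def)
    finally show ?thesis using a by simp
  qed
  have "(A * matrix_unit n a c * C) $$ (x,y) = (\<Sum>z<n. (A * matrix_unit n a c) $$ (x,z) * C $$ (z,y))"
    using mult_mat_entry[OF Ae C x y] .
  also have "\<dots> = (\<Sum>z<n. if z = c then A $$ (x,a) * C $$ (z,y) else 0)"
    using e1 by (intro sum.cong refl) auto
  finally show ?thesis using c by simp
qed

lemma lin_map_zero:
  assumes "lin_map n E"
  shows "E (0\<^sub>m n n) = 0\<^sub>m n n"
proof -
  have c: "E (0\<^sub>m n n) \<in> carrier_mat n n" using assms unfolding lin_map_def by auto
  have "E (0\<^sub>m n n) = E (0 \<cdot>\<^sub>m 0\<^sub>m n n)" by simp
  also have "\<dots> = 0 \<cdot>\<^sub>m E (0\<^sub>m n n)" using assms zero_carrier_mat[of n n] unfolding lin_map_def by blast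
  also have "\<dots> = 0\<^sub>m n n" using c by (intro eq_matI) auto
  finally show ?thesis .
qed

lemma lin_map_mat_comb:
  assumes E: "lin_map n E" and A: "\<And>k. k < N \<Longrightarrow> A k \<in> carrier_mat n n"
  shows "E (mat_comb n N c A) = mat_comb n N c (\<lambda>k. E (A k))"
  using A
proof (induction N)
  case 0
  have "mat_comb n 0 c A = 0\<^sub>m n n" "mat_comb n 0 c (\<lambda>k. E (A k)) = 0\<^sub>m n n"
    by (auto simp: mat_comb_def intro!: eq_matI)
  then show ?case using lin_map_zero[OF E] by simp
next
  case (Suc N)
  have step: "mat_comb n (Suc N) c B = mat_comb n N c B + c N \<cdot>\<^sub>m B N"
    if "B N \<in> carrier_mat n n" for B
    using that by (intro eq_matI) (auto simp: mat_comb_index)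
  have AN: "A N \<in> carrier_mat n n" and EAN: "E (A N) \<in> carrier_mat n n"
    using Suc.prems E unfolding lin_map_def by auto
  have "E (mat_comb n (Suc N) c A) = E (mat_comb n N c A) + c N \<cdot>\<^sub>m E (A N)"
    using E AN unfolding step[of A, OF AN] lin_map_def by simp
  also have "\<dots> = mat_comb n (Suc N) c (\<lambda>k. E (A k))"
    using Suc step[of "\<lambda>k. E (A k)"] EAN by simp
  finally show ?case .
qed

lemma block_index_lt: fixes a c n :: nat assumes "a < n" "c < n" shows "a*n + c < n*n"
proof -
  have "a*n + c < a*n + n" using assms by simp
  also have "\<dots> = (a+1)*n" by simp
  also have "\<dots> \<le> n*n" using assms by (intro mult_right_mono) auto
  finally show ?thesis .
qed

lemma lin_map_expand:
  assumes E: "lin_map n E" and X: "X \<in> carrier_mat n n" and b: "b < n" and d: "d < n"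
  shows "E X $$ (b,d) = (\<Sum>a<n. \<Sum>c<n. X $$ (a,c) * E (matrix_unit n a c) $$ (b,d))"
proof -
  define u where "u s = matrix_unit n (s div n) (s mod n)" for s
  have Xcomb: "X = mat_comb n (n*n) (\<lambda>s. X $$ (s div n, s mod n)) u"
  proof (rule eq_matI)
    fix x y assume "x < dim_row (mat_comb n (n*n) (\<lambda>s. X $$ (s div n, s mod n)) u)"
      "y < dim_col (mat_comb n (n*n) (\<lambda>s. X $$ (s div n, s mod n)) u)"
    then have x: "x < n" and y: "y < n" by auto
    have "mat_comb n (n*n) (\<lambda>s. X $$ (s div n, s mod n)) u $$ (x,y)
        = (\<Sum>a<n. if a = x then (\<Sum>c<n. if c = y then X $$ (a,c) else 0) else 0)"
      unfolding mat_comb_index[OF x y] sum_blocks u_def using x y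
      by (intro sum.cong refl) (auto simp: divmod_block matrix_unit_def if_distrib[of "\<lambda>t. _ * t"] cong: if_cong
        intro!: sum.cong sum.neutral)
    then show "X $$ (x,y) = mat_comb n (n*n) (\<lambda>s. X $$ (s div n, s mod n)) u $$ (x,y)"
      using x y by simp
  qed (use X in auto)
  have "E X = E (mat_comb n (n*n) (\<lambda>s. X $$ (s div n, s mod n)) u)" using arg_cong[OF Xcomb, of E] .
  also have "\<dots> = mat_comb n (n*n) (\<lambda>s. X $$ (s div n, s mod n)) (\<lambda>s. E (u s))"
    by (rule lin_map_mat_comb[OF E]) (simp add: u_def)
  finally have "E X = mat_comb n (n*n) (\<lambda>s. X $$ (s div n, s mod n)) (\<lambda>s. E (u s))" .
  then have "E X $$ (b,d) = (\<Sum>s<n*n. X $$ (s div n, s mod n) * E (u s) $$ (b,d))"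
    by (simp add: mat_comb_index[OF b d])
  also have "\<dots> = (\<Sum>a<n. \<Sum>c<n. X $$ (a,c) * E (matrix_unit n a c) $$ (b,d))"
    unfolding sum_blocks u_def by (simp add: divmod_block)
  finally show ?thesis .
qed

(* The (unnormalised) maximally entangled projector \<Sum>_(a,c) E_ac \<otimes> E_ac on C^n \<otimes> C^n. *)
definition max_entangled :: "nat \<Rightarrow> complex mat" where
  "max_entangled n = mat (n*n) (n*n) (\<lambda>(i,j). if i div n = i mod n \<and> j div n = j mod n then 1 else 0)"

(* It is positive semidefinite: its quadratic form is |\<Sum>_a v_(a*n+a)|\<^sup>2. *)
lemma max_entangled_psd: "psd (n*n) (max_entangled n)"
proof -
  have c: "max_entangled n \<in> carrier_mat (n*n) (n*n)" unfolding max_entangled_def by simp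
  have h: "adj (max_entangled n) = max_entangled n"
    by (rule eq_matI) (auto simp: max_entangled_def)
  have q: "Im q = 0 \<and> 0 \<le> Re q" if q: "q = (\<Sum>i<n*n. \<Sum>j<n*n. cnj (v $ i) * max_entangled n $$ (i,j) * v $ j)" for v :: "complex vec" and q
  proof -
    define P where "P i = (i div n = i mod n)" for i
    define s where "s = (\<Sum>j<n*n. if P j then v $ j else 0)"
    have "q = (\<Sum>i<n*n. \<Sum>j<n*n. (if P i then cnj (v $ i) else 0) * (if P j then v $ j else 0))"
      unfolding q max_entangled_def P_def by (intro sum.cong refl) auto
    also have "\<dots> = cnj s * s" unfolding s_def by (simp add: sum_product cnj_sum if_distrib[of cnj] cong: if_cong)
    finally have "q = cnj s * s" .
    then have "q = of_real ((cmod s)^2)" using complex_norm_square[of s] by (simp add: mult.commute del: of_real_power)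
    then show ?thesis by simp
  qed
  show ?thesis unfolding psd_def using c h q by (auto simp: Let_def)
qed

lemma choi_matrix_entry:
  assumes "a < n" "b < n" "c < n" "d < n"
  shows "lift n n E (max_entangled n) $$ (a*n+b, c*n+d) = E (matrix_unit n a c) $$ (b,d)"
proof -
  have "mat n n (\<lambda>(x,y). max_entangled n $$ (((a*n+b) div n)*n + x, ((c*n+d) div n)*n + y)) = matrix_unit n a c"
    using assms by (intro eq_matI) (auto simp: max_entangled_def matrix_unit_def block_index_lt divmod_block)
  then show ?thesis unfolding lift_def using assms block_index_lt by (simp add: divmod_block)
qed

lemma lin_map_eq_kraus_map:
  assumes E: "lin_map n E"
    and units: "\<And>a b c d. a < n \<Longrightarrow> b < n \<Longrightarrow> c < n \<Longrightarrow> d < n \<Longrightarrow>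
        E (matrix_unit n a c) $$ (b,d) = kraus_kernel S K b a d c"
    and X: "X \<in> carrier_mat n n"
  shows "E X = kraus_map n S K X"
proof (rule eq_matI)
  fix b d assume "b < dim_row (kraus_map n S K X)" "d < dim_col (kraus_map n S K X)"
  then have b: "b < n" and d: "d < n" by auto
  have "E X $$ (b,d) = (\<Sum>a<n. \<Sum>c<n. X $$ (a,c) * E (matrix_unit n a c) $$ (b,d))"
    by (rule lin_map_expand[OF E X b d])
  also have "\<dots> = kraus_map n S K X $$ (b,d)"
    unfolding kraus_map_alt[OF b d] using units b d by simp
  finally show "E X $$ (b,d) = kraus_map n S K X $$ (b,d)" .
qed (use E X in \<open>auto simp: lin_map_def\<close>)

(* Choi's theorem: every quantum channel has a Kraus representation with n*n complete Kraus
   operators, obtained from the spectral decomposition of the Choi matrix (id \<otimes> E)(max_entangled). *)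
lemma channel_kraus:
  assumes Q: "quantum_channel n E"
  shows "\<exists>K. (\<forall>k. K k \<in> carrier_mat n n) \<and> (\<forall>X\<in>carrier_mat n n. E X = kraus_map n {..<n*n} K X) \<and> kraus_complete n {..<n*n} K"
proof -
  have L: "lin_map n E" and CP: "completely_positive n E" and TP: "trace_preserving n E"
    using Q unfolding quantum_channel_def by auto
  have Ec: "E A \<in> carrier_mat n n" if "A \<in> carrier_mat n n" for A
    using L that unfolding lin_map_def by auto
  define J where "J = lift n n E (max_entangled n)"
  have J: "psd (n*n) J" unfolding J_def using CP max_entangled_psd unfolding completely_positive_def by blast
  obtain f \<mu> where f: "orthonormal (n*n) {..<n*n} f" "\<forall>i<n*n. 0 \<le> \<mu> i"
     "\<forall>p<n*n. \<forall>q<n*n. J $$ (p,q) = (\<Sum>i<n*n. of_real (\<mu> i) * f i p * cnj (f i q))"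
    using psd_decomp[OF J] by blast
  define K where "K i = mat n n (\<lambda>(b,a). of_real (sqrt (\<mu> i)) * f i (a*n+b))" for i
  have Eeu: "E (matrix_unit n a c) $$ (b,d) = kraus_kernel {..<n*n} K b a d c"
    if abcd: "a < n" "b < n" "c < n" "d < n" for a b c d
  proof -
    have "E (matrix_unit n a c) $$ (b,d) = (\<Sum>i<n*n. of_real (\<mu> i) * f i (a*n+b) * cnj (f i (c*n+d)))"
      using choi_matrix_entry[OF abcd, of E] f(3) block_index_lt abcd unfolding J_def by simp
    also have "\<dots> = kraus_kernel {..<n*n} K b a d c"
      unfolding kraus_kernel_def
    proof (intro sum.cong refl)
      fix i assume i: "i \<in> {..<n*n}"
      have "of_real (\<mu> i) = (of_real (sqrt (\<mu> i)) * of_real (sqrt (\<mu> i)) :: complex)"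
        using f(2) i by (simp flip: of_real_mult)
      then show "of_real (\<mu> i) * f i (a*n+b) * cnj (f i (c*n+d)) = K i $$ (b,a) * cnj (K i $$ (d,c))"
        unfolding K_def using abcd by (simp add: ac_simps)
    qed
    finally show ?thesis .
  qed
  have rep: "E X = kraus_map n {..<n*n} K X" if X: "X \<in> carrier_mat n n" for X
    by (rule lin_map_eq_kraus_map[OF L Eeu X])
  have "kraus_complete n {..<n*n} K"
    unfolding kraus_complete_def
  proof (intro allI impI)
    fix a c assume a: "a < n" and c: "c < n"
    have "mtrace (E (matrix_unit n c a)) = mtrace (matrix_unit n c a)" using TP unfolding trace_preserving_def by simp
    moreover have "mtrace (matrix_unit n c a) = (if a = c then 1 else 0)"
      unfolding mtrace_def matrix_unit_def using a c by (auto simp: if_distrib cong: if_cong)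
    moreover have "mtrace (E (matrix_unit n c a)) = (\<Sum>b<n. \<Sum>i<n*n. K i $$ (b,c) * cnj (K i $$ (b,a)))"
      unfolding mtrace_def using Ec[of "matrix_unit n c a"] Eeu a c by (simp add: kraus_kernel_def)
    moreover have "(\<Sum>b<n. \<Sum>i<n*n. K i $$ (b,c) * cnj (K i $$ (b,a)))
       = (\<Sum>i<n*n. \<Sum>b<n. cnj (K i $$ (b,a)) * K i $$ (b,c))"
      by (subst sum.swap) (simp add: ac_simps)
    ultimately show "(\<Sum>i<n*n. \<Sum>b<n. cnj (K i $$ (b,a)) * K i $$ (b,c)) = (if a = c then 1 else 0)"
      by simp
  qed
  moreover have "\<forall>k. K k \<in> carrier_mat n n" unfolding K_def by simp
  ultimately show ?thesis using rep by blast
qed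

(* The eigenvalues of an orthogonal projection are 0 and 1: \<mu> = <f, P f> = <P f, P f> = \<mu>\<^sup>2. *)
lemma orth_proj_eigenvalue:
  assumes P: "orth_proj n P" and f: "cinner n f f = 1"
    and Pf: "\<And>a. a < n \<Longrightarrow> apply_mat P f a = of_real \<mu> * f a"
  shows "\<mu> = 0 \<or> \<mu> = 1"
proof -
  have Pc: "P \<in> carrier_mat n n" and PP: "P * P = P" and Ph: "adj P = P"
    using P unfolding orth_proj_def by auto
  have Pf': "cinner n u (apply_mat P f) = of_real \<mu> * cinner n u f" for u
    using Pf by (subst cinner_cong2[of n _ "\<lambda>a. of_real \<mu> * f a"]) (auto simp: cinner_scale2)
  have "cinner n (apply_mat P f) (apply_mat P f) = cinner n f (apply_mat (adj P) (apply_mat P f))"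
    using cinner_adj[of "adj P" n f "apply_mat P f"] Pc by (simp add: adj_adj)
  also have "\<dots> = cinner n f (apply_mat (adj P * P) f)"
    using Pc by (intro cinner_cong2) (simp add: apply_mat_mult[of _ n n _ n])
  also have "\<dots> = of_real \<mu>" using Pf' f Ph PP by simp
  finally have "cinner n (apply_mat P f) (apply_mat P f) = of_real \<mu>" .
  moreover have "cinner n (apply_mat P f) (apply_mat P f) = of_real \<mu> * of_real \<mu>"
    using Pf' f Pf by (subst cinner_cong1[of n _ "\<lambda>a. of_real \<mu> * f a"]) (auto simp: cinner_scale1)
  ultimately have "\<mu> * \<mu> = \<mu>" by (metis of_real_eq_iff of_real_mult)
  then show ?thesis by (metis mult_cancel_right2 mult_eq_0_iff)
qed

definition basis_change :: "nat \<Rightarrow> (nat \<Rightarrow> nat \<Rightarrow> complex) \<Rightarrow> (nat \<Rightarrow> nat \<Rightarrow> complex) \<Rightarrow> complex mat" where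
  "basis_change n f g = mat n n (\<lambda>(a,b). \<Sum>i<n. g i a * cnj (f i b))"

lemma basis_change_unitary:
  assumes f: "orthonormal n {..<n} f" and g: "orthonormal n {..<n} g"
  shows "unitary_mat n (basis_change n f g)"
proof -
  define U where "U = basis_change n f g"
  have Uc: "U \<in> carrier_mat n n" unfolding U_def basis_change_def by simp
  have gg: "cinner n (g i) (g j) = (if i = j then 1 else 0)" if "i < n" "j < n" for i j
    using g that unfolding orthonormal_def by auto
  have "adj U * U = 1\<^sub>m n"
  proof (rule eq_matI)
    fix b b' assume "b < dim_row (1\<^sub>m n :: complex mat)" "b' < dim_col (1\<^sub>m n :: complex mat)"
    then have b: "b < n" and b': "b' < n" by auto
    have "(adj U * U) $$ (b,b') = (\<Sum>a<n. cnj (U $$ (a,b)) * U $$ (a,b'))"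
      using mult_mat_entry[of "adj U" n n U n b b'] Uc b b' by simp
    also have "\<dots> = (\<Sum>a<n. \<Sum>i<n. \<Sum>i'<n. f i b * cnj (f i' b') * (cnj (g i a) * g i' a))"
      unfolding U_def basis_change_def using b b'
      by (simp add: cnj_sum sum_product ac_simps)
    also have "\<dots> = (\<Sum>i<n. \<Sum>i'<n. \<Sum>a<n. f i b * cnj (f i' b') * (cnj (g i a) * g i' a))"
      by (rule sum_swap_inner)
    also have "\<dots> = (\<Sum>i<n. \<Sum>i'<n. f i b * cnj (f i' b') * cinner n (g i) (g i'))"
      unfolding cinner_def by (simp add: sum_distrib_left)
    also have "\<dots> = (\<Sum>i<n. f i b * cnj (f i b'))"
    proof (intro sum.cong refl)
      fix i assume i: "i \<in> {..<n}"
      have "(\<Sum>i'<n. f i b * cnj (f i' b') * cinner n (g i) (g i'))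
          = (\<Sum>i'<n. if i' = i then f i b * cnj (f i' b') else 0)"
        using gg i by (intro sum.cong refl) auto
      then show "(\<Sum>i'<n. f i b * cnj (f i' b') * cinner n (g i) (g i')) = f i b * cnj (f i b')"
        using i by simp
    qed
    also have "\<dots> = (if b = b' then 1 else 0)" using orthonormal_complete[OF f _ _ b b'] by simp
    finally show "(adj U * U) $$ (b,b') = 1\<^sub>m n $$ (b,b')" using b b' by simp
  qed (use Uc in auto)
  then show ?thesis using Uc unfolding unitary_mat_def U_def by simp
qed

lemma basis_change_mult_proj:
  assumes P: "orth_proj n P" and V: "V \<in> carrier_mat n n" and f: "orthonormal n {..<n} f"
    and Pf: "\<And>i a. i < n \<Longrightarrow> a < n \<Longrightarrow> apply_mat P (f i) a = of_real (\<mu> i) * f i a"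
    and \<mu>01: "\<And>i. i < n \<Longrightarrow> \<mu> i = 0 \<or> \<mu> i = 1"
    and g1: "\<And>i. i < n \<Longrightarrow> \<mu> i = 1 \<Longrightarrow> g i = apply_mat V (f i)"
    and V0: "\<And>i a. i < n \<Longrightarrow> \<mu> i = 0 \<Longrightarrow> a < n \<Longrightarrow> apply_mat V (f i) a = 0"
  shows "basis_change n f g * P = V"
proof -
  have Pc: "P \<in> carrier_mat n n" and Ph: "adj P = P"
    using P unfolding orth_proj_def by auto
  define U where "U = basis_change n f g"
  have Uc: "U \<in> carrier_mat n n" unfolding U_def basis_change_def by simp
  have "U * P = V"
  proof (rule eq_matI)
    fix a b assume "a < dim_row V" "b < dim_col V"
    then have a: "a < n" and b: "b < n" using V by auto
    have Pcol: "(\<Sum>c<n. cnj (f i c) * P $$ (c,b)) = of_real (\<mu> i) * cnj (f i b)" if i: "i < n" for i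
    proof -
      have "(\<Sum>c<n. cnj (f i c) * P $$ (c,b)) = cnj (apply_mat P (f i) b)"
        unfolding apply_mat_def using Pc hermitian_entry[OF Pc Ph b] by (simp add: cnj_sum mult.commute)
      then show ?thesis using Pf i b by simp
    qed
    have "(U * P) $$ (a,b) = (\<Sum>c<n. (\<Sum>i<n. g i a * cnj (f i c)) * P $$ (c,b))"
      using mult_mat_entry[OF Uc Pc a b] a unfolding U_def basis_change_def by simp
    also have "\<dots> = (\<Sum>i<n. g i a * (\<Sum>c<n. cnj (f i c) * P $$ (c,b)))"
      by (simp add: sum_distrib_left sum_distrib_right ac_simps) (rule sum.swap)
    also have "\<dots> = (\<Sum>i<n. apply_mat V (f i) a * cnj (f i b))"
    proof (intro sum.cong refl)
      fix i assume i: "i \<in> {..<n}"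
      show "g i a * (\<Sum>c<n. cnj (f i c) * P $$ (c,b)) = apply_mat V (f i) a * cnj (f i b)"
        using \<mu>01[of i] i Pcol[of i] V0[of i a] a g1[of i] by auto
    qed
    also have "\<dots> = (\<Sum>c<n. V $$ (a,c) * (\<Sum>i<n. f i c * cnj (f i b)))"
      unfolding apply_mat_def using V by (simp add: sum_distrib_left sum_distrib_right ac_simps) (rule sum.swap)
    also have "\<dots> = (\<Sum>c<n. if c = b then V $$ (a,c) else 0)"
      using orthonormal_complete[OF f] b by (intro sum.cong refl) auto
    also have "\<dots> = V $$ (a,b)" using b by simp
    finally show "(U * P) $$ (a,b) = V $$ (a,b)" .
  qed (use V Uc Pc in auto)
  then show ?thesis unfolding U_def .
qed

(* A partial isometry V with V\<^sup>\<dagger> V = P and V P = V agrees on the range of P with some unitary: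
   the images V f_i of the eigenvectors of P with eigenvalue 1 are orthonormal; extending them to a
   complete orthonormal family g, the basis change from f to g does the job. *)
lemma unitary_extension:
  assumes P: "orth_proj n P" and V: "V \<in> carrier_mat n n" and VV: "adj V * V = P" and VP: "V * P = V"
  shows "\<exists>U. unitary_mat n U \<and> U * P = V"
proof -
  have Pc: "P \<in> carrier_mat n n" and Ph: "adj P = P"
    using P unfolding orth_proj_def by auto
  obtain f \<mu> where f: "orthonormal n {..<n} f" "\<forall>i<n. \<forall>a<n. apply_mat P (f i) a = of_real (\<mu> i) * f i a"
    using hermitian_spectral[OF Pc Ph] by blast
  have ff: "cinner n (f i) (f j) = (if i = j then 1 else 0)" if "i < n" "j < n" for i j
    using f(1) that unfolding orthonormal_def by auto
  have \<mu>01: "\<mu> i = 0 \<or> \<mu> i = 1" if i: "i < n" for i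
    by (rule orth_proj_eigenvalue[OF P]) (use ff[OF i i] f(2) i in auto)
  define I1 where "I1 = {i. i < n \<and> \<mu> i = 1}"
  define h where "h i = apply_mat V (f i)" for i
  have VVf: "apply_mat (adj V) (apply_mat V (f j)) a = of_real (\<mu> j) * f j a" if "j < n" "a < n" for j a
    using apply_mat_mult[of "adj V" n n V n a "f j"] V VV f(2) that by simp
  have oh: "orthonormal n I1 h"
    unfolding orthonormal_def
  proof (intro ballI)
    fix i j assume i: "i \<in> I1" and j: "j \<in> I1"
    have "cinner n (h i) (h j) = cinner n (f i) (apply_mat (adj V) (apply_mat V (f j)))"
      unfolding h_def using cinner_adj[of "adj V" n "f i" "apply_mat V (f j)"] V by (simp add: adj_adj)
    also have "\<dots> = cinner n (f i) (f j)"
      using VVf j unfolding I1_def by (intro cinner_cong2) auto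
    finally show "cinner n (h i) (h j) = (if i = j then 1 else 0)" using ff i j unfolding I1_def by auto
  qed
  obtain g where g: "orthonormal n {..<n} g" "\<forall>i\<in>I1. g i = h i"
    using orthonormal_extend[OF oh, of "{..<n}"] unfolding I1_def by auto
  have V0: "apply_mat V (f i) a = 0" if i: "i < n" and \<mu>0: "\<mu> i = 0" and a: "a < n" for i a
  proof -
    have "apply_mat V (f i) a = apply_mat (V * P) (f i) a" using VP by simp
    also have "\<dots> = apply_mat V (apply_mat P (f i)) a" using apply_mat_mult[OF V Pc a] .
    also have "\<dots> = apply_mat V (\<lambda>_. 0) a" using f(2) i \<mu>0 V by (intro apply_mat_cong) auto
    also have "\<dots> = 0" unfolding apply_mat_def by simp
    finally show ?thesis .
  qed
  have "basis_change n f g * P = V"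
    by (rule basis_change_mult_proj[OF P V f(1) _ \<mu>01 _ V0]) (use f(2) g(2) in \<open>auto simp: I1_def h_def\<close>)
  then show ?thesis using basis_change_unitary[OF f(1) g(1)] by blast
qed

lemma adj_mult_self_zero:
  assumes G: "G \<in> carrier_mat n n" and GG: "adj G * G = 0\<^sub>m n n"
  shows "G = 0\<^sub>m n n"
proof (rule eq_matI)
  fix x a assume "x < dim_row (0\<^sub>m n n :: complex mat)" "a < dim_col (0\<^sub>m n n :: complex mat)"
  then have x: "x < n" and a: "a < n" by auto
  have "(adj G * G) $$ (a,a) = (\<Sum>y<n. G $$ (y,a) * cnj (G $$ (y,a)))"
    using mult_mat_entry[OF adj_carrier[OF G] G a a] G a by (simp add: mult.commute)
  then have "(\<Sum>y\<in>{..<n}. G $$ (y,a) * cnj (G $$ (y,a))) = 0" using GG a by simp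
  then show "G $$ (x,a) = 0\<^sub>m n n $$ (x,a)"
    using sum_norm_sq_zero[of "{..<n}" "\<lambda>y. G $$ (y,a)" x] x a by simp
qed (use G in auto)

lemma scaled_isometry_unitary:
  assumes P: "orth_proj n P" and G: "G \<in> carrier_mat n n" and GP: "G * P = G"
    and GG: "adj G * G = of_real \<mu> \<cdot>\<^sub>m P" and \<mu>: "0 < \<mu>"
  shows "\<exists>U. unitary_mat n U \<and> U * P = of_real (1 / sqrt \<mu>) \<cdot>\<^sub>m G"
proof (rule unitary_extension[OF P])
  have Pc: "P \<in> carrier_mat n n" using P unfolding orth_proj_def by auto
  let ?c = "of_real (1 / sqrt \<mu>) :: complex"
  show "?c \<cdot>\<^sub>m G \<in> carrier_mat n n" using G by simp
  have "adj (?c \<cdot>\<^sub>m G) * (?c \<cdot>\<^sub>m G) = (cnj ?c * ?c) \<cdot>\<^sub>m (of_real \<mu> \<cdot>\<^sub>m P)"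
    unfolding adj_smult_mult[OF G G] GG ..
  also have "\<dots> = (cnj ?c * ?c * of_real \<mu>) \<cdot>\<^sub>m P" by (rule eq_matI) auto
  also have "cnj ?c * ?c * of_real \<mu> = 1" using \<mu> by (simp flip: of_real_mult)
  finally show "adj (?c \<cdot>\<^sub>m G) * (?c \<cdot>\<^sub>m G) = P" by (simp add: smult_one_mat)
  show "?c \<cdot>\<^sub>m G * P = ?c \<cdot>\<^sub>m G" using mult_smult_assoc_mat[OF G Pc] GP by simp
qed

lemma sandwich_code:
  assumes P: "orth_proj n P" and U: "U \<in> carrier_mat n n"
    and \<rho>: "\<rho> \<in> carrier_mat n n" and code: "\<rho> = P * \<rho> * P"
  shows "U * \<rho> * adj U = (U * P) * \<rho> * adj (U * P)"
proof -
  have Pc: "P \<in> carrier_mat n n" and Ph: "adj P = P"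
    using P unfolding orth_proj_def by auto
  have "U * \<rho> * adj U = U * (P * \<rho> * P) * adj U" using code by simp
  also have "\<dots> = (U * P) * \<rho> * (adj P * adj U)"
    using assoc5[OF U Pc \<rho> Pc adj_carrier[OF U]] Ph by simp
  also have "\<dots> = (U * P) * \<rho> * adj (U * P)" using adj_mult[OF U Pc] by simp
  finally show ?thesis .
qed

(* A nonzero orthogonal projection has nonzero trace: tr P = tr (P P\<^sup>\<dagger>) = \<Sum> |P_ac|\<^sup>2. *)
lemma orth_proj_trace_nonzero:
  assumes P: "orth_proj n P" and Pnz: "P \<noteq> 0\<^sub>m n n"
  shows "mtrace P \<noteq> 0"
proof
  have Pc: "P \<in> carrier_mat n n" and PP: "P * P = P" and Ph: "adj P = P"
    using P unfolding orth_proj_def by auto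
  have Phe: "cnj (P $$ (a,b)) = P $$ (b,a)" if "a < n" "b < n" for a b
    using hermitian_entry[OF Pc Ph that(2) that(1)] by simp
  have PPe: "(\<Sum>z<n. P $$ (a,z) * P $$ (z,b)) = P $$ (a,b)" if "a < n" "b < n" for a b
    using mult_mat_entry[OF Pc Pc that] PP by simp
  assume t0: "mtrace P = 0"
  have "mtrace P = (\<Sum>a<n. \<Sum>c<n. P $$ (a,c) * cnj (P $$ (a,c)))"
    unfolding mtrace_def using Pc PPe Phe by simp
  also have "\<dots> = (\<Sum>(a,c)\<in>{..<n} \<times> {..<n}. P $$ (a,c) * cnj (P $$ (a,c)))"
    by (simp add: sum.cartesian_product)
  finally have "(\<Sum>j\<in>{..<n} \<times> {..<n}. (\<lambda>(a,c). P $$ (a,c)) j * cnj ((\<lambda>(a,c). P $$ (a,c)) j)) = 0"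
    using t0 by (simp add: case_prod_beta)
  then have "P $$ (a,c) = 0" if "a < n" "c < n" for a c
    using sum_norm_sq_zero[of "{..<n} \<times> {..<n}" "\<lambda>(a,c). P $$ (a,c)" "(a,c)"] that by simp
  then have "P = 0\<^sub>m n n" using Pc by (intro eq_matI) auto
  then show False using Pnz by simp
qed

(* Equality case of the Cauchy-Schwarz inequality: if \<Sum> |x_j|\<^sup>2 = |p|\<^sup>2, \<Sum> x_j conj (c_j) = p and
   \<Sum> |c_j|\<^sup>2 = 1, then x = p c, because \<Sum> |x_j - p c_j|\<^sup>2 expands to 0. *)
lemma cauchy_schwarz_equality:
  fixes x c :: "'j \<Rightarrow> complex"
  assumes fin: "finite J" and xx: "(\<Sum>j\<in>J. x j * cnj (x j)) = p * cnj p"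
    and xc: "(\<Sum>j\<in>J. x j * cnj (c j)) = p" and cc: "(\<Sum>j\<in>J. c j * cnj (c j)) = 1" and j: "j \<in> J"
  shows "x j = c j * p"
proof -
  have cx: "(\<Sum>j\<in>J. c j * cnj (x j)) = cnj p"
    using arg_cong[OF xc, of cnj] by (simp add: cnj_sum mult.commute)
  have "(\<Sum>j\<in>J. (x j - c j * p) * cnj (x j - c j * p))
      = (\<Sum>j\<in>J. x j * cnj (x j)) - cnj p * (\<Sum>j\<in>J. x j * cnj (c j))
        - p * (\<Sum>j\<in>J. c j * cnj (x j)) + p * cnj p * (\<Sum>j\<in>J. c j * cnj (c j))"
    by (simp add: algebra_simps sum_subtractf sum.distrib sum_distrib_left)
  also have "\<dots> = 0" using xx xc cx cc by simp
  finally have "x j - c j * p = 0" using sum_norm_sq_zero[OF fin _ j, of "\<lambda>j. x j - c j * p"] by simp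
  then show ?thesis by simp
qed

(* The Knill-Laflamme argument: if \<Sum>_j B_j(x,a) conj (B_j(y,c)) = P(x,a) P(c,y) for a
   Hermitian P, then each B_j is a scalar multiple of P (Cauchy-Schwarz with equality). *)
lemma kraus_proportional:
  fixes B :: "'j \<Rightarrow> complex mat"
  assumes fin: "finite J"
    and Ph: "\<And>a b. a < n \<Longrightarrow> b < n \<Longrightarrow> cnj (P $$ (a,b)) = P $$ (b,a)"
    and st: "\<And>x y a c. x < n \<Longrightarrow> y < n \<Longrightarrow> a < n \<Longrightarrow> c < n \<Longrightarrow>
        (\<Sum>j\<in>J. B j $$ (x,a) * cnj (B j $$ (y,c))) = P $$ (x,a) * P $$ (c,y)"
  shows "\<exists>cc. \<forall>j\<in>J. \<forall>x<n. \<forall>a<n. B j $$ (x,a) = cc j * P $$ (x,a)"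
proof (cases "\<exists>s<n. \<exists>t<n. P $$ (s,t) \<noteq> 0")
  case False
  have "B j $$ (x,a) = 0 * P $$ (x,a)" if j: "j \<in> J" and x: "x < n" and a: "a < n" for j x a
  proof -
    have "(\<Sum>j\<in>J. B j $$ (x,a) * cnj (B j $$ (x,a))) = 0"
      using st[OF x x a a] False x a by auto
    then show ?thesis using sum_norm_sq_zero[OF fin _ j] by simp
  qed
  then show ?thesis by (intro exI[of _ "\<lambda>j. 0"]) auto
next
  case True
  then obtain s t where s: "s < n" and t: "t < n" and nz: "P $$ (s,t) \<noteq> 0" by auto
  define cc where "cc j = B j $$ (s,t) / P $$ (s,t)" for j
  have Pts: "P $$ (t,s) = cnj (P $$ (s,t))" using Ph[OF s t] by simp
  have c1: "(\<Sum>j\<in>J. B j $$ (x,a) * cnj (cc j)) = P $$ (x,a)" if x: "x < n" and a: "a < n" for x a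
  proof -
    have "(\<Sum>j\<in>J. B j $$ (x,a) * cnj (cc j)) = (\<Sum>j\<in>J. B j $$ (x,a) * cnj (B j $$ (s,t))) / cnj (P $$ (s,t))"
      unfolding cc_def by (simp add: sum_divide_distrib)
    also have "\<dots> = P $$ (x,a)" using st[OF x s a t] Pts nz by simp
    finally show ?thesis .
  qed
  have c2: "(\<Sum>j\<in>J. cc j * cnj (cc j)) = 1"
  proof -
    have "(\<Sum>j\<in>J. cc j * cnj (cc j)) = (\<Sum>j\<in>J. B j $$ (s,t) * cnj (cc j)) / P $$ (s,t)"
      unfolding cc_def by (simp add: sum_divide_distrib mult.commute)
    also have "\<dots> = 1" using c1[OF s t] nz by simp
    finally show ?thesis .
  qed
  have "B j $$ (x,a) = cc j * P $$ (x,a)" if j: "j \<in> J" and x: "x < n" and a: "a < n" for j x a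
  proof (rule cauchy_schwarz_equality[OF fin _ c1[OF x a] c2 j])
    show "(\<Sum>j\<in>J. B j $$ (x,a) * cnj (B j $$ (x,a))) = P $$ (x,a) * cnj (P $$ (x,a))"
      using st[OF x x a a] Ph[OF x a] by simp
  qed
  then show ?thesis by (intro exI[of _ cc]) auto
qed

lemma recovery_kraus_proportional:
  assumes P: "orth_proj n P"
    and K: "\<And>k. k \<in> T \<Longrightarrow> K k \<in> carrier_mat n n" and L: "\<And>l. l \<in> S \<Longrightarrow> L l \<in> carrier_mat n n"
    and fS: "finite S" and fT: "finite T"
    and recover: "\<And>X. X \<in> carrier_mat n n \<Longrightarrow> kraus_map n S L (kraus_map n T K (P * X * P)) = P * X * P"
  obtains c where "\<And>l k. l \<in> S \<Longrightarrow> k \<in> T \<Longrightarrow> L l * (K k * P) = c (l,k) \<cdot>\<^sub>m P"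
proof -
  have Pc: "P \<in> carrier_mat n n" and Ph: "adj P = P"
    using P unfolding orth_proj_def by auto
  define B where "B = (\<lambda>(l,k). L l * (K k * P))"
  have composite: "kraus_map n (S \<times> T) B X = P * X * P" if X: "X \<in> carrier_mat n n" for X
  proof -
    have "P * X * P = kraus_map n S L (kraus_map n T K (P * X * adj P))"
      using recover[OF X] Ph by simp
    also have "\<dots> = kraus_map n S L (kraus_map n T (\<lambda>k. K k * P) X)"
      using kraus_map_sandwich[where T=T and K=K, OF K Pc X] by simp
    also have "\<dots> = kraus_map n (S \<times> T) B X"
      unfolding B_def by (rule kraus_map_comp) (use K L Pc in \<open>auto intro: mult_carrier_mat\<close>)
    finally show ?thesis by simp
  qed
  have "(\<Sum>j\<in>S \<times> T. B j $$ (x,a) * cnj (B j $$ (y,c))) = P $$ (x,a) * P $$ (c,y)"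
    if xyac: "x < n" "y < n" "a < n" "c < n" for x y a c
    using composite[of "matrix_unit n a c"] kraus_map_matrix_unit[OF xyac, of "S \<times> T" B]
      matrix_unit_sandwich[OF Pc Pc xyac(3,4,1,2)]
    unfolding kraus_kernel_def by simp
  moreover have "cnj (P $$ (a,b)) = P $$ (b,a)" if "a < n" "b < n" for a b
    using hermitian_entry[OF Pc Ph that(2) that(1)] by simp
  ultimately obtain c where c: "\<forall>j\<in>S \<times> T. \<forall>x<n. \<forall>a<n. B j $$ (x,a) = c j * P $$ (x,a)"
    using kraus_proportional[of "S \<times> T" n P B] fS fT by blast
  have "L l * (K k * P) = c (l,k) \<cdot>\<^sub>m P" if lk: "l \<in> S" "k \<in> T" for l k
  proof (rule eq_matI)
    fix i j assume ij: "i < dim_row (c (l,k) \<cdot>\<^sub>m P)" "j < dim_col (c (l,k) \<cdot>\<^sub>m P)"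
    then have "B (l,k) $$ (i,j) = c (l,k) * P $$ (i,j)" using c lk Pc by auto
    then show "(L l * (K k * P)) $$ (i,j) = (c (l,k) \<cdot>\<^sub>m P) $$ (i,j)" using ij by (simp add: B_def)
  qed (use K[OF lk(2)] L[OF lk(1)] Pc in auto)
  then show ?thesis by (rule that)
qed

(* Unitary freedom of Kraus representations: rotating the operators K_k P by an orthonormal
   eigenbasis of the Gram matrix of the coefficients c (where L_l K_k P = c_lk P) yields
   Kraus operators G_r of the same map that are mutually orthogonal: G_r\<^sup>\<dagger> G_s = \<delta>_rs \<mu>_r P. *)
lemma kraus_orthogonalise:
  fixes N :: nat
  assumes P: "orth_proj n P"
    and K: "\<And>k. K k \<in> carrier_mat n n" and L: "\<And>l. l \<in> S \<Longrightarrow> L l \<in> carrier_mat n n"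
    and Lc: "kraus_complete n S L"
    and proportional: "\<And>l k. l \<in> S \<Longrightarrow> k < N \<Longrightarrow> L l * (K k * P) = c (l,k) \<cdot>\<^sub>m P"
  obtains G \<mu> where "\<And>r. r < N \<Longrightarrow> 0 \<le> \<mu> r" "\<And>r. G r \<in> carrier_mat n n" "\<And>r. G r * P = G r"
    "\<And>X. kraus_map n {..<N} G X = kraus_map n {..<N} (\<lambda>k. K k * P) X"
    "\<And>r s. r < N \<Longrightarrow> s < N \<Longrightarrow> adj (G r) * G s = (if r = s then of_real (\<mu> r) else 0) \<cdot>\<^sub>m P"
proof -
  have Pc: "P \<in> carrier_mat n n" and PP: "P * P = P" and Ph: "adj P = P"
    using P unfolding orth_proj_def by auto
  have KPc: "K k * P \<in> carrier_mat n n" for k by (rule mult_carrier_mat[OF K Pc])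
  define \<Lambda> where "\<Lambda> k j = (\<Sum>l\<in>S. cnj (c (l,k)) * c (l,j))" for k j
  obtain f \<mu> where f: "orthonormal N {..<N} f" "\<forall>i<N. 0 \<le> \<mu> i"
     "\<forall>k<N. \<forall>j<N. \<Lambda> k j = (\<Sum>i<N. of_real (\<mu> i) * f i k * cnj (f i j))"
    using psd_decomp[OF gram_psd[where c="\<lambda>l k. c (l,k)" and S=S and N=N]] unfolding \<Lambda>_def by auto
  define G where "G r = mat_comb n N (f r) (\<lambda>k. K k * P)" for r
  have Gc: "G r \<in> carrier_mat n n" for r unfolding G_def by simp
  have same_map: "kraus_map n {..<N} G X = kraus_map n {..<N} (\<lambda>k. K k * P) X" for X
    unfolding G_def by (rule kraus_map_kernel_eq) (rule kraus_kernel_mix[OF f(1)])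
  have GP: "G r * P = G r" for r
  proof -
    have "K k * P * P = K k * P" for k using K Pc PP by (simp add: assoc_mult_mat[of _ n n _ n _ n])
    then show ?thesis unfolding G_def using mat_comb_mult_right[OF Pc KPc] by simp
  qed
  define \<gamma> where "\<gamma> l r = (\<Sum>k<N. f r k * c (l,k))" for l r
  have LG: "L l * G r = \<gamma> l r \<cdot>\<^sub>m P" if l: "l \<in> S" for l r
  proof -
    have "L l * G r = mat_comb n N (f r) (\<lambda>k. c (l,k) \<cdot>\<^sub>m P)"
      unfolding G_def mat_comb_mult_left[OF L[OF l] KPc] using proportional[OF l]
      by (intro mat_comb_cong) simp
    then show ?thesis unfolding mat_comb_smult[OF Pc] \<gamma>_def .
  qed
  have gram: "(\<Sum>l\<in>S. cnj (\<gamma> l r) * \<gamma> l s) = (if r = s then of_real (\<mu> r) else 0)"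
    if "r < N" "s < N" for r s
    unfolding \<gamma>_def by (rule gram_diagonalise[OF f(1) _ that]) (use f(3) in \<open>simp add: \<Lambda>_def\<close>)
  have GG: "adj (G r) * G s = (if r = s then of_real (\<mu> r) else 0) \<cdot>\<^sub>m P"
    if r: "r < N" and s: "s < N" for r s
  proof (rule eq_matI)
    fix a b assume "a < dim_row ((if r = s then of_real (\<mu> r) else 0) \<cdot>\<^sub>m P)"
      "b < dim_col ((if r = s then of_real (\<mu> r) else 0) \<cdot>\<^sub>m P)"
    then have a: "a < n" and b: "b < n" using Pc by auto
    have "(adj (G r) * G s) $$ (a,b) = (\<Sum>l\<in>S. (adj (L l * G r) * (L l * G s)) $$ (a,b))"
      by (rule kraus_complete_adj_mult[OF Lc L Gc Gc a b])
    also have "\<dots> = (\<Sum>l\<in>S. cnj (\<gamma> l r) * \<gamma> l s * P $$ (a,b))"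
      using LG adj_smult_mult[OF Pc Pc] Ph PP a b Pc by (intro sum.cong refl) simp
    also have "\<dots> = ((if r = s then of_real (\<mu> r) else 0) \<cdot>\<^sub>m P) $$ (a,b)"
      using gram[OF r s] a b Pc by (simp add: sum_distrib_right[symmetric])
    finally show "(adj (G r) * G s) $$ (a,b) = ((if r = s then of_real (\<mu> r) else 0) \<cdot>\<^sub>m P) $$ (a,b)" .
  qed (use Gc Pc in auto)
  show ?thesis by (rule that[of \<mu> G]) (use f(2) Gc GP same_map GG in auto)
qed

lemma orthogonal_kraus_weights_sum:
  assumes P: "orth_proj n P" and Pnz: "P \<noteq> 0\<^sub>m n n" and G: "\<And>r. G r \<in> carrier_mat n n"
    and GG: "\<And>r. r < N \<Longrightarrow> adj (G r) * G r = of_real (\<mu> r) \<cdot>\<^sub>m P"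
    and tp: "mtrace (kraus_map n {..<N} G P) = mtrace P"
  shows "(\<Sum>r<N. \<mu> r) = 1"
proof -
  have Pc: "P \<in> carrier_mat n n" and PP: "P * P = P"
    using P unfolding orth_proj_def by auto
  have PPe: "(\<Sum>z<n. P $$ (a,z) * P $$ (z,b)) = P $$ (a,b)" if "a < n" "b < n" for a b
    using mult_mat_entry[OF Pc Pc that] PP by simp
  have "mtrace P = (\<Sum>a<n. \<Sum>c<n. P $$ (a,c) * (\<Sum>r<N. (adj (G r) * G r) $$ (c,a)))"
    using tp kraus_map_trace[of "{..<N}" G n P] G by simp
  also have "\<dots> = (\<Sum>a<n. \<Sum>c<n. P $$ (a,c) * (\<Sum>r<N. of_real (\<mu> r) * P $$ (c,a)))"
    using GG Pc by (intro sum.cong refl) simp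
  also have "\<dots> = of_real (\<Sum>r<N. \<mu> r) * (\<Sum>a<n. \<Sum>c<n. P $$ (a,c) * P $$ (c,a))"
    by (simp add: sum_distrib_left sum_distrib_right ac_simps)
  also have "\<dots> = of_real (\<Sum>r<N. \<mu> r) * mtrace P"
    unfolding mtrace_def using Pc PPe by simp
  finally have "mtrace P = of_real (\<Sum>r<N. \<mu> r) * mtrace P" .
  then have "of_real (\<Sum>r<N. \<mu> r) = (1::complex)"
    using orth_proj_trace_nonzero[OF P Pnz] by simp
  then show ?thesis by (simp only: of_real_eq_1_iff)
qed

definition orthogonal_mixed_unitary_on :: "nat \<Rightarrow> (complex mat \<Rightarrow> complex mat) \<Rightarrow> complex mat \<Rightarrow> bool" where
  "orthogonal_mixed_unitary_on n E P \<longleftrightarrow> (\<exists>(m::nat) (p::nat \<Rightarrow> real) (U::nat \<Rightarrow> complex mat).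
       (\<forall>i<m. 0 \<le> p i) \<and> (\<Sum>i<m. p i) = 1 \<and> (\<forall>i<m. unitary_mat n (U i)) \<and>
       (\<forall>\<rho> \<in> carrier_mat n n. \<rho> = P * \<rho> * P \<longrightarrow> E \<rho> = mixed_unitary n m p U \<rho>) \<and>
       (\<forall>i<m. \<forall>j<m. i \<noteq> j \<longrightarrow> P * adj (U i) * U j * P = 0\<^sub>m n n))"

lemma orthogonal_kraus_unitaries:
  fixes N :: nat
  assumes P: "orth_proj n P" and G: "\<And>r. G r \<in> carrier_mat n n" and GP: "\<And>r. G r * P = G r"
    and GG: "\<And>r s. r < N \<Longrightarrow> s < N \<Longrightarrow> adj (G r) * G s = (if r = s then of_real (\<mu> r) else 0) \<cdot>\<^sub>m P"
  obtains U where "\<And>r. r < N \<Longrightarrow> 0 < \<mu> r \<Longrightarrow> unitary_mat n (U r)"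
    and "\<And>r \<rho>. r < N \<Longrightarrow> 0 < \<mu> r \<Longrightarrow> \<rho> \<in> carrier_mat n n \<Longrightarrow> \<rho> = P * \<rho> * P \<Longrightarrow>
      G r * \<rho> * adj (G r) = of_real (\<mu> r) \<cdot>\<^sub>m (U r * \<rho> * adj (U r))"
    and "\<And>r s. r < N \<Longrightarrow> s < N \<Longrightarrow> 0 < \<mu> r \<Longrightarrow> 0 < \<mu> s \<Longrightarrow> r \<noteq> s \<Longrightarrow>
      P * adj (U r) * U s * P = 0\<^sub>m n n"
proof -
  have Pc: "P \<in> carrier_mat n n" and Ph: "adj P = P"
    using P unfolding orth_proj_def by auto
  define c where "c r = (of_real (1 / sqrt (\<mu> r)) :: complex)" for r
  have "\<forall>r\<in>{r. r < N \<and> 0 < \<mu> r}. \<exists>U. unitary_mat n U \<and> U * P = c r \<cdot>\<^sub>m G r"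
    using scaled_isometry_unitary[OF P G GP] GG unfolding c_def by auto
  then obtain U where U: "\<And>r. r < N \<Longrightarrow> 0 < \<mu> r \<Longrightarrow> unitary_mat n (U r) \<and> U r * P = c r \<cdot>\<^sub>m G r"
    by (metis mem_Collect_eq)
  have Uc: "U r \<in> carrier_mat n n" if "r < N" "0 < \<mu> r" for r
    using U[OF that] unfolding unitary_mat_def by simp
  have branch: "G r * \<rho> * adj (G r) = of_real (\<mu> r) \<cdot>\<^sub>m (U r * \<rho> * adj (U r))"
    if r: "r < N" "0 < \<mu> r" and \<rho>: "\<rho> \<in> carrier_mat n n" and code: "\<rho> = P * \<rho> * P" for r \<rho>
  proof -
    have "U r * \<rho> * adj (U r) = (c r * cnj (c r)) \<cdot>\<^sub>m (G r * \<rho> * adj (G r))"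
      using sandwich_code[OF P Uc[OF r] \<rho> code] U[OF r] smult_sandwich[OF G \<rho>] by simp
    moreover have "of_real (\<mu> r) * (c r * cnj (c r)) = 1"
      using r unfolding c_def by (simp flip: of_real_mult)
    ultimately show ?thesis by (intro eq_matI) (auto simp: mult.assoc[symmetric])
  qed
  have orthogonal: "P * adj (U r) * U s * P = 0\<^sub>m n n"
    if r: "r < N" "0 < \<mu> r" and s: "s < N" "0 < \<mu> s" and rs: "r \<noteq> s" for r s
  proof -
    have "P * adj (U r) * U s * P = adj (U r * P) * (U s * P)"
      using assoc4[OF Pc adj_carrier[OF Uc[OF r]] Uc[OF s] Pc] adj_mult[OF Uc[OF r] Pc] Ph by simp
    also have "\<dots> = (cnj (c r) * c s) \<cdot>\<^sub>m (adj (G r) * G s)"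
      unfolding conjunct2[OF U[OF r]] conjunct2[OF U[OF s]] by (rule adj_smult_mult[OF G G])
    also have "\<dots> = 0\<^sub>m n n"
      using GG[OF r(1) s(1)] rs Pc by (intro eq_matI) auto
    finally show ?thesis .
  qed
  show ?thesis by (rule that[of U]) (use U branch orthogonal in auto)
qed

(* A map F that agrees on code operators with the Kraus map of mutually orthogonal operators
   G_r (G_r\<^sup>\<dagger> G_s = \<delta>_rs \<mu>_r P, \<Sum> \<mu>_r = 1) is there a mixed unitary channel with orthogonal branches:
   keep the indices of positive weight and enumerate them. *)
lemma orthogonal_kraus_mixed_unitary:
  fixes N :: nat
  assumes P: "orth_proj n P" and G: "\<And>r. G r \<in> carrier_mat n n" and GP: "\<And>r. G r * P = G r"
    and GG: "\<And>r s. r < N \<Longrightarrow> s < N \<Longrightarrow> adj (G r) * G s = (if r = s then of_real (\<mu> r) else 0) \<cdot>\<^sub>m P"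
    and \<mu>0: "\<And>r. r < N \<Longrightarrow> 0 \<le> \<mu> r" and \<mu>1: "(\<Sum>r<N. \<mu> r) = 1"
    and FG: "\<And>\<rho>. \<rho> \<in> carrier_mat n n \<Longrightarrow> \<rho> = P * \<rho> * P \<Longrightarrow> F \<rho> = kraus_map n {..<N} G \<rho>"
  shows "orthogonal_mixed_unitary_on n F P"
proof -
  have Pc: "P \<in> carrier_mat n n" using P unfolding orth_proj_def by auto
  obtain V where Vu: "\<And>r. r < N \<Longrightarrow> 0 < \<mu> r \<Longrightarrow> unitary_mat n (V r)"
    and branch: "\<And>r \<rho>. r < N \<Longrightarrow> 0 < \<mu> r \<Longrightarrow> \<rho> \<in> carrier_mat n n \<Longrightarrow> \<rho> = P * \<rho> * P \<Longrightarrow>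
      G r * \<rho> * adj (G r) = of_real (\<mu> r) \<cdot>\<^sub>m (V r * \<rho> * adj (V r))"
    and orthogonal: "\<And>r s. r < N \<Longrightarrow> s < N \<Longrightarrow> 0 < \<mu> r \<Longrightarrow> 0 < \<mu> s \<Longrightarrow> r \<noteq> s \<Longrightarrow>
      P * adj (V r) * V s * P = 0\<^sub>m n n"
    by (rule orthogonal_kraus_unitaries[OF P G GP GG]) auto
  define Sp where "Sp = {r. r < N \<and> 0 < \<mu> r}"
  obtain h where h: "bij_betw h {..<card Sp} Sp"
    using ex_bij_betw_nat_finite[of Sp] by (auto simp: Sp_def atLeast0LessThan)
  define m where "m = card Sp"
  define p where "p i = \<mu> (h i)" for i
  define U where "U i = V (h i)" for i
  have hS: "h i < N" "0 < \<mu> (h i)" if "i < m" for i using h that unfolding m_def bij_betw_def Sp_def by auto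
  have hinj: "h i \<noteq> h j" if "i < m" "j < m" "i \<noteq> j" for i j
    using h that unfolding m_def bij_betw_def inj_on_def by auto
  have Uu: "unitary_mat n (U i)" if "i < m" for i using Vu hS[OF that] unfolding U_def by simp
  have weights: "(\<Sum>i<m. p i) = 1"
  proof -
    have "(\<Sum>i<m. p i) = (\<Sum>r\<in>Sp. \<mu> r)"
      unfolding p_def m_def using sum.reindex_bij_betw[OF h, of \<mu>] by simp
    also have "\<dots> = (\<Sum>r<N. \<mu> r)"
      using \<mu>0 by (intro sum.mono_neutral_left) (auto simp: Sp_def, metis le_neq_trans)
    finally show ?thesis using \<mu>1 by simp
  qed
  have channel: "F \<rho> = mixed_unitary n m p U \<rho>"
    if \<rho>: "\<rho> \<in> carrier_mat n n" and code: "\<rho> = P * \<rho> * P" for \<rho>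
  proof -
    have "F \<rho> = kraus_map n {..<N} G \<rho>" by (rule FG[OF \<rho> code])
    also have "\<dots> = kraus_map n Sp G \<rho>"
    proof (rule kraus_map_drop_zero)
      show "G r = 0\<^sub>m n n" if "r \<in> {..<N} - Sp" for r
      proof (rule adj_mult_self_zero[OF G])
        have "r < N" "\<mu> r = 0" using that \<mu>0[of r] unfolding Sp_def by auto
        then have "adj (G r) * G r = 0 \<cdot>\<^sub>m P" using GG[of r r] by simp
        also have "\<dots> = 0\<^sub>m n n" using Pc by (intro eq_matI) auto
        finally show "adj (G r) * G r = 0\<^sub>m n n" .
      qed
    qed (auto simp: Sp_def)
    also have "\<dots> = kraus_map n {..<m} (\<lambda>i. G (h i)) \<rho>"
      using kraus_map_reindex[OF h] unfolding m_def by simp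
    also have "\<dots> = mixed_unitary n m p U \<rho>"
      by (rule kraus_map_mixed_unitary[OF G _ \<rho>])
        (use Uu branch hS \<rho> code in \<open>auto simp: unitary_mat_def U_def p_def\<close>)
    finally show ?thesis .
  qed
  have "P * adj (U i) * U j * P = 0\<^sub>m n n" if "i < m" "j < m" "i \<noteq> j" for i j
    using orthogonal[of "h i" "h j"] hS[OF that(1)] hS[OF that(2)] hinj[OF that] unfolding U_def by blast
  moreover have "\<forall>i<m. 0 \<le> p i" using hS \<mu>0 unfolding p_def by (auto simp: less_imp_le)
  ultimately show ?thesis
    unfolding orthogonal_mixed_unitary_on_def using weights Uu channel
    by (intro exI[of _ m] exI[of _ p] exI[of _ U] conjI allI ballI impI) auto
qed

(* Forward direction for a nonzero code: write E and a recovery R in Kraus form; the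
   composite operators are multiples of P (Knill-Laflamme), which after a unitary change
   of Kraus operators become orthogonal scaled isometries, i.e. a mixed unitary channel. *)
lemma correctable_imp_mixed_unitary:
  assumes E: "quantum_channel n E" and P: "orth_proj n P" and corr: "correctable n E P"
    and Pnz: "P \<noteq> 0\<^sub>m n n"
  shows "orthogonal_mixed_unitary_on n E P"
proof -
  have Pc: "P \<in> carrier_mat n n" and Ph: "adj P = P" using P unfolding orth_proj_def by auto
  obtain R where R: "quantum_channel n R" and RE: "\<And>X. X \<in> carrier_mat n n \<Longrightarrow> R (E (P * X * P)) = P * X * P"
    using corr unfolding correctable_def by blast
  obtain K where K: "\<And>k. K k \<in> carrier_mat n n" and EK: "\<And>X. X \<in> carrier_mat n n \<Longrightarrow> E X = kraus_map n {..<n*n} K X"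
    using channel_kraus[OF E] by blast
  obtain L where L: "\<And>l. L l \<in> carrier_mat n n" and RL: "\<And>X. X \<in> carrier_mat n n \<Longrightarrow> R X = kraus_map n {..<n*n} L X"
    and Lc: "kraus_complete n {..<n*n} L"
    using channel_kraus[OF R] by blast
  obtain c where "\<And>l k. l \<in> {..<n*n} \<Longrightarrow> k \<in> {..<n*n} \<Longrightarrow> L l * (K k * P) = c (l,k) \<cdot>\<^sub>m P"
  proof (rule recovery_kraus_proportional[OF P])
    fix X :: "complex mat" assume X: "X \<in> carrier_mat n n"
    then have "P * X * P \<in> carrier_mat n n" using Pc by simp
    then show "kraus_map n {..<n*n} L (kraus_map n {..<n*n} K (P * X * P)) = P * X * P"
      using RE[OF X] EK RL by simp
  qed (use K L that in auto)
  then obtain G \<mu> where \<mu>0: "\<And>r. r < n*n \<Longrightarrow> 0 \<le> \<mu> r" and G: "\<And>r. G r \<in> carrier_mat n n" "\<And>r. G r * P = G r"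
    and same: "\<And>X. kraus_map n {..<n*n} G X = kraus_map n {..<n*n} (\<lambda>k. K k * P) X"
    and GG: "\<And>r s. r < n*n \<Longrightarrow> s < n*n \<Longrightarrow> adj (G r) * G s = (if r = s then of_real (\<mu> r) else 0) \<cdot>\<^sub>m P"
    by (rule kraus_orthogonalise[OF P K L Lc]) auto
  have EG: "E \<rho> = kraus_map n {..<n*n} G \<rho>" if \<rho>: "\<rho> \<in> carrier_mat n n" and code: "\<rho> = P * \<rho> * P" for \<rho>
  proof -
    have "E \<rho> = kraus_map n {..<n*n} K \<rho>" by (rule EK[OF \<rho>])
    also have "\<dots> = kraus_map n {..<n*n} K (P * \<rho> * adj P)" unfolding Ph by (rule arg_cong[OF code])
    also have "\<dots> = kraus_map n {..<n*n} (\<lambda>k. K k * P) \<rho>" by (rule kraus_map_sandwich[OF _ Pc \<rho>]) (simp add: K)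
    finally show ?thesis using same by simp
  qed
  have PPP: "P = P * P * P" using P unfolding orth_proj_def by simp
  have "mtrace (E P) = mtrace P"
    using E Pc unfolding quantum_channel_def trace_preserving_def by blast
  then have tp: "mtrace (kraus_map n {..<n*n} G P) = mtrace P" using EG[OF Pc PPP] by simp
  have "adj (G r) * G r = of_real (\<mu> r) \<cdot>\<^sub>m P" if "r < n*n" for r using GG[OF that that] by simp
  from orthogonal_kraus_weights_sum[OF P Pnz G(1) this tp] have "(\<Sum>r<n*n. \<mu> r) = 1" .
  from orthogonal_kraus_mixed_unitary[OF P G GG \<mu>0 this EG] show ?thesis .
qed

(* Forward direction for the zero code: every channel vanishes on L(C) = {0}. *)
lemma zero_code_mixed_unitary:
  assumes Q: "quantum_channel n E" and Pz: "P = 0\<^sub>m n n"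
  shows "orthogonal_mixed_unitary_on n E P"
  unfolding orthogonal_mixed_unitary_on_def
proof (intro exI[of _ "1::nat"] exI[of _ "\<lambda>_. 1::real"] exI[of _ "\<lambda>_. 1\<^sub>m n"] conjI allI impI ballI)
  show "unitary_mat n (1\<^sub>m n)" unfolding unitary_mat_def adj_one by simp
  fix \<rho> assume rc: "\<rho> \<in> carrier_mat n n" and rP: "\<rho> = P * \<rho> * P"
  have r0: "\<rho> = 0\<^sub>m n n" using rP rc Pz by simp
  have "E \<rho> = 0\<^sub>m n n" using lin_map_zero[of n E] Q r0 unfolding quantum_channel_def by simp
  moreover have "mixed_unitary n 1 (\<lambda>_. 1) (\<lambda>_. 1\<^sub>m n) \<rho> = 0\<^sub>m n n"
    unfolding mixed_unitary_def r0 by (rule eq_matI) (auto simp: adj_one)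
  ultimately show "E \<rho> = mixed_unitary n 1 (\<lambda>_. 1) (\<lambda>_. 1\<^sub>m n) \<rho>" by simp
qed auto

(* The projection Q = \<Sum>_i W_i W_i\<^sup>\<dagger> onto the joint range of the isometries W_i. *)
definition range_proj :: "nat \<Rightarrow> nat \<Rightarrow> (nat \<Rightarrow> complex mat) \<Rightarrow> complex mat" where
  "range_proj n m W = mat n n (\<lambda>(a,b). \<Sum>i<m. \<Sum>z<n. W i $$ (a,z) * cnj (W i $$ (b,z)))"

lemma range_proj_carrier[simp]: "range_proj n m W \<in> carrier_mat n n"
  unfolding range_proj_def by simp

lemma range_proj_hermitian: "a < n \<Longrightarrow> b < n \<Longrightarrow> cnj (range_proj n m W $$ (a,b)) = range_proj n m W $$ (b,a)"
  unfolding range_proj_def by (simp add: cnj_sum mult.commute)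

lemma range_proj_fixes:
  assumes P: "orth_proj n P" and W: "\<And>i. i < m \<Longrightarrow> W i \<in> carrier_mat n n"
    and WP: "\<And>i. i < m \<Longrightarrow> W i * P = W i"
    and WW: "\<And>i j. i < m \<Longrightarrow> j < m \<Longrightarrow> adj (W i) * W j = (if i = j then P else 0\<^sub>m n n)"
    and j: "j < m"
  shows "range_proj n m W * W j = W j"
proof -
  have Pc: "P \<in> carrier_mat n n" using P unfolding orth_proj_def by auto
  define Q where "Q = range_proj n m W"
  have Qc: "Q \<in> carrier_mat n n" unfolding Q_def by simp
  have WWe: "(\<Sum>c<n. cnj (W i $$ (c,z)) * W j $$ (c,y)) = (if i = j then P $$ (z,y) else 0)"
    if "i < m" "j < m" "z < n" "y < n" for i j z y
  proof -
    have "(adj (W i) * W j) $$ (z,y) = (\<Sum>c<n. cnj (W i $$ (c,z)) * W j $$ (c,y))"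
      using mult_mat_entry[OF adj_carrier[OF W[OF that(1)]] W[OF that(2)] that(3,4)] that W[OF that(1)] by simp
    then show ?thesis using WW[OF that(1,2)] that by auto
  qed
  have QW: "(\<Sum>c<n. Q $$ (a,c) * W j $$ (c,y)) = W j $$ (a,y)" if a: "a < n" and y: "y < n" for a y
  proof -
    have "(\<Sum>c<n. Q $$ (a,c) * W j $$ (c,y)) = (\<Sum>c<n. \<Sum>i<m. \<Sum>z<n. W i $$ (a,z) * (cnj (W i $$ (c,z)) * W j $$ (c,y)))"
      unfolding Q_def range_proj_def using a by (intro sum.cong refl) (simp add: sum_distrib_left sum_distrib_right ac_simps)
    also have "\<dots> = (\<Sum>i<m. \<Sum>z<n. \<Sum>c<n. W i $$ (a,z) * (cnj (W i $$ (c,z)) * W j $$ (c,y)))"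
      by (rule sum_swap_inner)
    also have "\<dots> = (\<Sum>i<m. \<Sum>z<n. W i $$ (a,z) * (if i = j then P $$ (z,y) else 0))"
      using WWe j y by (simp add: sum_distrib_left[symmetric])
    also have "\<dots> = (\<Sum>i<m. if i = j then (\<Sum>z<n. W j $$ (a,z) * P $$ (z,y)) else 0)"
      by (intro sum.cong refl) auto
    also have "\<dots> = (\<Sum>z<n. W j $$ (a,z) * P $$ (z,y))" using j by simp
    also have "\<dots> = W j $$ (a,y)" using mult_mat_entry[OF W[OF j] Pc a y] WP[OF j] by simp
    finally show ?thesis .
  qed
  show ?thesis unfolding Q_def[symmetric]
    using QW mult_mat_entry[OF Qc W[OF j]] Qc W[OF j] by (intro eq_matI) auto
qed

(* ... and Q is an orthogonal projection: Q Q = \<Sum>_i W_i (Q W_i)\<^sup>\<dagger> = Q. *)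
lemma range_proj_is_projection:
  assumes P: "orth_proj n P" and W: "\<And>i. i < m \<Longrightarrow> W i \<in> carrier_mat n n"
    and WP: "\<And>i. i < m \<Longrightarrow> W i * P = W i"
    and WW: "\<And>i j. i < m \<Longrightarrow> j < m \<Longrightarrow> adj (W i) * W j = (if i = j then P else 0\<^sub>m n n)"
  shows "orth_proj n (range_proj n m W)"
proof -
  define Q where "Q = range_proj n m W"
  have Qc: "Q \<in> carrier_mat n n" unfolding Q_def by simp
  have Qh: "cnj (Q $$ (a,b)) = Q $$ (b,a)" if "a < n" "b < n" for a b
    unfolding Q_def using range_proj_hermitian that .
  have QW: "(\<Sum>c<n. Q $$ (b,c) * W i $$ (c,z)) = W i $$ (b,z)" if "i < m" "b < n" "z < n" for i b z
    using range_proj_fixes[OF P W WP WW that(1)] mult_mat_entry[OF Qc W[OF that(1)] that(2,3)]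
    unfolding Q_def by simp
  have QQ: "Q * Q = Q"
  proof (rule eq_matI)
    fix a b assume "a < dim_row Q" "b < dim_col Q"
    then have a: "a < n" and b: "b < n" using Qc by auto
    have "(Q * Q) $$ (a,b) = (\<Sum>c<n. \<Sum>i<m. \<Sum>z<n. W i $$ (a,z) * (cnj (W i $$ (c,z)) * Q $$ (c,b)))"
      using mult_mat_entry[OF Qc Qc a b] unfolding Q_def range_proj_def using a
      by (simp add: sum_distrib_left sum_distrib_right ac_simps)
    also have "\<dots> = (\<Sum>i<m. \<Sum>z<n. \<Sum>c<n. W i $$ (a,z) * (cnj (W i $$ (c,z)) * Q $$ (c,b)))"
      by (rule sum_swap_inner)
    also have "\<dots> = (\<Sum>i<m. \<Sum>z<n. W i $$ (a,z) * cnj (\<Sum>c<n. Q $$ (b,c) * W i $$ (c,z)))"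
      using Qh b by (simp add: sum_distrib_left cnj_sum ac_simps)
    also have "\<dots> = (\<Sum>i<m. \<Sum>z<n. W i $$ (a,z) * cnj (W i $$ (b,z)))"
      using QW b by simp
    also have "\<dots> = Q $$ (a,b)" unfolding Q_def range_proj_def using a b by simp
    finally show "(Q * Q) $$ (a,b) = Q $$ (a,b)" .
  qed (use Qc in auto)
  have "adj Q = Q" using Qh Qc by (intro eq_matI) auto
  with Qc QQ show ?thesis unfolding orth_proj_def Q_def by simp
qed

(* Completing a Kraus family: for an orthogonal projection Q the operators T_b = |0\<rangle>\<langle>b| (I - Q)
   satisfy \<Sum>_b T_b\<^sup>\<dagger> T_b = I - Q and annihilate the range of Q. *)
definition compl_kraus :: "nat \<Rightarrow> complex mat \<Rightarrow> nat \<Rightarrow> complex mat" where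
  "compl_kraus n Q b = mat n n (\<lambda>(x,y). if x = 0 then (if b = y then 1 else 0) - Q $$ (b,y) else 0)"

lemma compl_kraus_complete:
  assumes Q: "orth_proj n Q" and a: "a < n" and c: "c < n"
  shows "(\<Sum>b<n. \<Sum>x<n. cnj (compl_kraus n Q b $$ (x,a)) * compl_kraus n Q b $$ (x,c))
       = (if a = c then 1 else 0) - Q $$ (a,c)"
proof -
  have Qc: "Q \<in> carrier_mat n n" and QQ: "Q * Q = Q" and Qh: "adj Q = Q"
    using Q unfolding orth_proj_def by auto
  have Qhe: "cnj (Q $$ (a,b)) = Q $$ (b,a)" if "a < n" "b < n" for a b
    using hermitian_entry[OF Qc Qh that(2) that(1)] by simp
  have QQe: "(\<Sum>b<n. Q $$ (a,b) * Q $$ (b,c)) = Q $$ (a,c)"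
    using mult_mat_entry[OF Qc Qc a c] QQ by simp
  define D where "D a b = (if a = b then 1 else 0) - Q $$ (a,b)" for a b
  have "(\<Sum>b<n. \<Sum>x<n. cnj (compl_kraus n Q b $$ (x,a)) * compl_kraus n Q b $$ (x,c))
      = (\<Sum>b<n. cnj (D b a) * D b c)"
  proof (intro sum.cong refl)
    fix b assume b: "b \<in> {..<n}"
    have "(\<Sum>x<n. cnj (compl_kraus n Q b $$ (x,a)) * compl_kraus n Q b $$ (x,c))
        = (\<Sum>x<n. if x = 0 then cnj (D b a) * D b c else 0)"
      unfolding compl_kraus_def D_def using a c by (intro sum.cong refl) auto
    then show "(\<Sum>x<n. cnj (compl_kraus n Q b $$ (x,a)) * compl_kraus n Q b $$ (x,c)) = cnj (D b a) * D b c"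
      using b by simp
  qed
  also have "\<dots> = (\<Sum>b<n. (if a = b then 1 else 0) * (if b = c then 1 else 0) - (if a = b then 1 else 0) * Q $$ (b,c)
            - Q $$ (a,b) * (if b = c then 1 else 0) + Q $$ (a,b) * Q $$ (b,c))"
    unfolding D_def using Qhe a by (intro sum.cong refl) (auto simp: algebra_simps)
  also have "\<dots> = (if a = c then 1 else 0) - Q $$ (a,c) - Q $$ (a,c) + Q $$ (a,c)"
  proof -
    have h: "Q $$ (a,b) * (if b = c then 1 else 0) = (if b = c then Q $$ (a,c) else 0)" for b by simp
    show ?thesis
      using a c QQe by (simp add: h sum.distrib sum_subtractf if_distrib[of "\<lambda>t. t * _"] cong: if_cong)
  qed
  finally show ?thesis by simp
qed

lemma compl_kraus_annihilates:
  assumes Qc: "Q \<in> carrier_mat n n" and W: "W \<in> carrier_mat n n" and QW: "Q * W = W" and b: "b < n"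
  shows "compl_kraus n Q b * W = 0\<^sub>m n n"
proof (rule eq_matI)
  fix x y assume "x < dim_row (0\<^sub>m n n :: complex mat)" "y < dim_col (0\<^sub>m n n :: complex mat)"
  then have x: "x < n" and y: "y < n" by auto
  have Tc: "compl_kraus n Q b \<in> carrier_mat n n" unfolding compl_kraus_def by simp
  have "(compl_kraus n Q b * W) $$ (x,y) = (if x = 0 then (\<Sum>z<n. ((if b = z then 1 else 0) - Q $$ (b,z)) * W $$ (z,y)) else 0)"
    using mult_mat_entry[OF Tc W x y] x unfolding compl_kraus_def by (auto intro!: sum.neutral)
  also have "(\<Sum>z<n. ((if b = z then 1 else 0) - Q $$ (b,z)) * W $$ (z,y)) = W $$ (b,y) - (Q * W) $$ (b,y)"
    using mult_mat_entry[OF Qc W b y] b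
    by (simp add: algebra_simps sum_subtractf if_distrib[of "\<lambda>t. t * _"] if_distrib[of "\<lambda>t. _ * t"] cong: if_cong)
  also have "\<dots> = 0" using QW by simp
  finally show "(compl_kraus n Q b * W) $$ (x,y) = 0\<^sub>m n n $$ (x,y)" using x y by simp
qed (use W in \<open>auto simp: compl_kraus_def\<close>)

(* Recovery from orthogonal isometries (W_i\<^sup>\<dagger> W_j = \<delta>_ij P): the Kraus family
   W_0\<^sup>\<dagger>, ..., W_{m-1}\<^sup>\<dagger> completed by the T_b for Q = \<Sum>_i W_i W_i\<^sup>\<dagger> is trace preserving and maps
   every W_j \<rho> W_j\<^sup>\<dagger> back to P \<rho> P. *)
lemma isometries_recovery:
  assumes P: "orth_proj n P" and W: "\<And>i. i < m \<Longrightarrow> W i \<in> carrier_mat n n"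
    and WP: "\<And>i. i < m \<Longrightarrow> W i * P = W i"
    and WW: "\<And>i j. i < m \<Longrightarrow> j < m \<Longrightarrow> adj (W i) * W j = (if i = j then P else 0\<^sub>m n n)"
  obtains L where "kraus_complete n {..<m+n} L"
    and "\<And>j \<rho>. j < m \<Longrightarrow> \<rho> \<in> carrier_mat n n \<Longrightarrow> kraus_map n {..<m+n} L (W j * \<rho> * adj (W j)) = P * \<rho> * P"
proof -
  have Pc: "P \<in> carrier_mat n n" and Ph: "adj P = P" using P unfolding orth_proj_def by auto
  define Q where "Q = range_proj n m W"
  have QW: "\<And>j. j < m \<Longrightarrow> Q * W j = W j" and Q: "orth_proj n Q"
    using range_proj_fixes[OF P W WP WW] range_proj_is_projection[OF P W WP WW] unfolding Q_def by auto
  have Qc: "Q \<in> carrier_mat n n" using Q unfolding orth_proj_def by auto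
  define L where "L k = (if k < m then adj (W k) else compl_kraus n Q (k - m))" for k
  have Lc: "L k \<in> carrier_mat n n" if "k < m + n" for k
    unfolding L_def compl_kraus_def using W by auto
  have complete: "kraus_complete n {..<m+n} L"
    unfolding kraus_complete_def
  proof (intro allI impI)
    fix a c assume a: "a < n" and c: "c < n"
    have "(\<Sum>k<m. \<Sum>b<n. cnj (L k $$ (b,a)) * L k $$ (b,c)) = Q $$ (a,c)"
    proof -
      have "cnj (L k $$ (b,a)) * L k $$ (b,c) = W k $$ (a,b) * cnj (W k $$ (c,b))"
        if "k < m" "b < n" for k b
        using W[OF that(1)] that a c unfolding L_def by (simp add: mult.commute)
      then show ?thesis unfolding Q_def range_proj_def using a c by simp
    qed
    moreover have "(\<Sum>k<n. \<Sum>b<n. cnj (L (m+k) $$ (b,a)) * L (m+k) $$ (b,c)) = (if a = c then 1 else 0) - Q $$ (a,c)"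
      using compl_kraus_complete[OF Q a c] unfolding L_def by simp
    ultimately show "(\<Sum>k<m+n. \<Sum>b<n. cnj (L k $$ (b,a)) * L k $$ (b,c)) = (if a = c then 1 else 0)"
      using sum_split_at[of m "m+n" "\<lambda>k. \<Sum>b<n. cnj (L k $$ (b,a)) * L k $$ (b,c)"] by simp
  qed
  have LW: "L k * W j = (if k = j then P else 0\<^sub>m n n)" if k: "k < m + n" and j: "j < m" for k j
  proof (cases "k < m")
    case True
    then show ?thesis unfolding L_def using WW[OF True j] by simp
  next
    case False
    then show ?thesis unfolding L_def using compl_kraus_annihilates[OF Qc W[OF j] QW[OF j], of "k - m"] k j by auto
  qed
  have "kraus_map n {..<m+n} L (W j * \<rho> * adj (W j)) = P * \<rho> * P"
    if j: "j < m" and \<rho>: "\<rho> \<in> carrier_mat n n" for j \<rho>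
    using kraus_map_single_branch[of "{..<m+n}" L n j "W j" P \<rho>] Lc W[OF j] Pc \<rho> LW j Ph by simp
  with complete show ?thesis by (rule that)
qed

(* Backward direction: the isometries W_i = U_i P have orthogonal ranges, so the recovery map of
   isometries_recovery undoes each unitary branch and hence, by linearity, the mixture. *)
lemma mixed_unitary_imp_correctable:
  assumes P: "orth_proj n P" and mixed: "orthogonal_mixed_unitary_on n E P"
  shows "correctable n E P"
proof -
  obtain m p U where "\<forall>i<m. 0 \<le> p i" and p1: "(\<Sum>i<m. p i) = 1" and Uu: "\<forall>i<m. unitary_mat n (U i)"
    and EU: "\<forall>\<rho> \<in> carrier_mat n n. \<rho> = P * \<rho> * P \<longrightarrow> E \<rho> = mixed_unitary n m p U \<rho>"
    and orth: "\<forall>i<m. \<forall>j<m. i \<noteq> j \<longrightarrow> P * adj (U i) * U j * P = 0\<^sub>m n n"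
    using mixed unfolding orthogonal_mixed_unitary_on_def by (elim exE conjE)
  have Pc: "P \<in> carrier_mat n n" and PP: "P * P = P" and Ph: "adj P = P"
    using P unfolding orth_proj_def by auto
  have Uc: "U i \<in> carrier_mat n n" and UU: "adj (U i) * U i = 1\<^sub>m n" if "i < m" for i
    using Uu that unfolding unitary_mat_def by auto
  define W where "W i = U i * P" for i
  have Wc: "W i \<in> carrier_mat n n" if "i < m" for i using Uc[OF that] Pc unfolding W_def by simp
  have WP: "W i * P = W i" if "i < m" for i
    unfolding W_def using Uc[OF that] Pc PP by (simp add: assoc_mult_mat[OF Uc[OF that] Pc Pc])
  have WW: "adj (W i) * W j = (if i = j then P else 0\<^sub>m n n)" if i: "i < m" and j: "j < m" for i j
  proof -
    have "adj (W i) * W j = P * adj (U i) * U j * P"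
      using adj_mult[OF Uc[OF i] Pc] assoc4[OF Pc adj_carrier[OF Uc[OF i]] Uc[OF j] Pc] Ph unfolding W_def by simp
    moreover have "P * adj (U i) * U i * P = P"
      using UU[OF i] Pc PP by (simp add: assoc_mult_mat[OF Pc adj_carrier[OF Uc[OF i]] Uc[OF i]])
    ultimately show ?thesis using orth i j by auto
  qed
  obtain L where L: "kraus_complete n {..<m+n} L"
    and LW: "\<And>j \<rho>. j < m \<Longrightarrow> \<rho> \<in> carrier_mat n n \<Longrightarrow> kraus_map n {..<m+n} L (W j * \<rho> * adj (W j)) = P * \<rho> * P"
    by (rule isometries_recovery[OF P Wc WP WW]) auto
  have "kraus_map n {..<m+n} L (E (P * \<rho> * P)) = P * \<rho> * P" if \<rho>: "\<rho> \<in> carrier_mat n n" for \<rho>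
  proof -
    define \<sigma> where "\<sigma> = P * \<rho> * P"
    have \<sigma>c: "\<sigma> \<in> carrier_mat n n" unfolding \<sigma>_def using Pc \<rho> by simp
    have code: "\<sigma> = P * \<sigma> * P" unfolding \<sigma>_def using assoc5[OF Pc Pc \<rho> Pc Pc] PP by simp
    have branch: "kraus_map n {..<m+n} L (U j * \<sigma> * adj (U j)) = P * \<rho> * P" if j: "j < m" for j
    proof -
      have "U j * \<sigma> * adj (U j) = W j * \<rho> * adj (W j)"
        using assoc5[OF Uc[OF j] Pc \<rho> Pc adj_carrier[OF Uc[OF j]]] adj_mult[OF Uc[OF j] Pc] Ph
        unfolding \<sigma>_def W_def by simp
      then show ?thesis using LW[OF j \<rho>] by simp
    qed
    have "kraus_map n {..<m+n} L (E \<sigma>) = mat_comb n m (\<lambda>j. of_real (p j)) (\<lambda>j. 1 \<cdot>\<^sub>m (P * \<rho> * P))"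
      unfolding EU[rule_format, OF \<sigma>c code] mixed_unitary_mat_comb kraus_map_mat_comb
      using branch by (intro mat_comb_cong) (simp add: smult_one_mat)
    also have "\<dots> = (\<Sum>j<m. of_real (p j) * 1) \<cdot>\<^sub>m (P * \<rho> * P)"
      by (rule mat_comb_smult) (use Pc \<rho> in simp)
    also have "\<dots> = P * \<rho> * P" using p1 by (simp add: smult_one_mat flip: of_real_sum)
    finally show ?thesis unfolding \<sigma>_def .
  qed
  then show ?thesis unfolding correctable_def using kraus_map_channel[OF L] by blast
qed

theorem lemma1:
  fixes n :: nat and E :: "complex mat \<Rightarrow> complex mat" and P :: "complex mat"
  assumes "quantum_channel n E" and "orth_proj n P"
  shows "correctable n E P \<longleftrightarrow>
    (\<exists>(m::nat) (p::nat \<Rightarrow> real) (U::nat \<Rightarrow> complex mat).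
       (\<forall>i<m. 0 \<le> p i) \<and> (\<Sum>i<m. p i) = 1 \<and> (\<forall>i<m. unitary_mat n (U i)) \<and>
       (\<forall>\<rho> \<in> carrier_mat n n. \<rho> = P * \<rho> * P \<longrightarrow> E \<rho> = mixed_unitary n m p U \<rho>) \<and>
       (\<forall>i<m. \<forall>j<m. i \<noteq> j \<longrightarrow> P * adj (U i) * U j * P = 0\<^sub>m n n))"
proof -
  have "correctable n E P \<longleftrightarrow> orthogonal_mixed_unitary_on n E P"
  proof
    assume "correctable n E P"
    then show "orthogonal_mixed_unitary_on n E P"
    proof (cases "P = 0\<^sub>m n n")
      case True
      then show ?thesis by (rule zero_code_mixed_unitary[OF assms(1)])
    next
      case False
      with \<open>correctable n E P\<close> show ?thesis by (intro correctable_imp_mixed_unitary[OF assms])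
    qed
  next
    assume "orthogonal_mixed_unitary_on n E P"
    then show "correctable n E P" by (rule mixed_unitary_imp_correctable[OF assms(2)])
  qed
  then show ?thesis unfolding orthogonal_mixed_unitary_on_def .
qed

end
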